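(* Let $\mathbb E^{\mathcal A},\mathbb E^{\mathcal B},\mathbb E^{\mathcal C}$ be decomposed symmetric $n$-fold vector bundles over $M,N,P$ and $\eta=(\eta_p)_p\colon\mathbb E^{\mathcal A}\to\mathbb E^{\mathcal B}$, $\tau=(\tau_p)_p\colon\mathbb E^{\mathcal B}\to\mathbb E^{\mathcal C}$ morphisms of symmetric $n$-fold vector bundles over $\eta_0\colon M\to N$, $\tau_0\colon N\to P$. Then $\tau\circ\eta$, a morphism over $\tau_0\circ\eta_0$, has components given, for every nondecreasing tuple $p=(i_1,\ldots,i_k)$ with $\sum p\le n$, $\rho^p_{\rm can}=(K_1,\ldots,K_k)$ and $a_{K_j}\in A_{i_j}$ over a common point, by $$(\tau\circ\eta)_p(a_{K_1},\ldots,a_{K_k})=\sum_{(\rho_1,\ldots,\rho_l)}\mathrm{sgn}(\rho_1,\ldots,\rho_l)\,\tau_{(\#\cup\rho_1,\ldots,\#\cup\rho_l)}\Big(\eta_{|\rho_1|}\big((a_K)_{K\in\rho_1}\big),\ldots,\eta_{|\rho_l|}\big((a_K)_{K\in\rho_l}\big)\Big),$$ the sum running over all $l\ge1$ and tuples of canonically ordered partitions $\rho_1,\ldots,\rho_l$ with $\rho_1\cup\cdots\cup\rho_l=\{K_1,\ldots,K_k\}$ as sets and $\cup\rho_1<\cdots<\cup\rho_l$ in the canonical order of subsets (by cardinality, then lexicographically); $(\rho_1,\ldots,\rho_l)$ denotes the concatenated ordered partition of $\{1,\ldots,\sum p\}$ and $(a_K)_{K\in\rho_j}$ is listed in the order of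 $\rho_j$.
   Context: For vector bundles $A_1,\ldots,A_n\to M$, $\mathbb E^{\mathcal A}(I)=\prod^M_{\emptyset\ne J\subseteq I}A_{\#J}$ with canonical projections and $S_n$-action $(a_J)_{J\subseteq I}\mapsto(\epsilon(\sigma^{-1},J)a_{\sigma^{-1}(J)})_{J\subseteq\sigma(I)}$, $\epsilon(\sigma,I)=(-1)^{\#\{(a,b)\in I^2:a<b,\sigma(a)>\sigma(b)\}}$. A morphism $\tau\colon\mathbb E^{\mathcal A}\to\mathbb E^{\mathcal B}$ of symmetric $n$-fold vector bundles (equivariant morphism of $n$-fold vector bundles) is the same as a family $(\tau_p)_{p}$, $p=(i_1,\ldots,i_k)$ nondecreasing with $\sum p\le n$, of vector bundle morphisms $\tau_p\colon A_{i_1}\otimes\cdots\otimes A_{i_k}\to B_{\sum p}$ over a common base map, symmetric in arguments from $A_j$, $j$ even, skew-symmetric for $j$ odd, via $\tau(J)((a_I)_{I\subseteq J})=(\sum_{\rho=(I_1,\ldots,I_k)\in\mathcal P(I)}\mathrm{sgn}(\rho)\tau_{(\#I_1,\ldots,\#I_k)}(a_{I_1},\ldots,a_{I_k}))_{I\subseteq J}$. Notation: $\mathcal P(I)$ canonically ordered partitions (increasing cardinality, ties lexicographic); $|\rho|=(\#I_1,\ldots,\#I_k)$; $\rho^p_{\rm can}$ the partition of $\{1,\ldots,\sum p\}$ into consecutive blocks of sizes $i_1,\ldots,i_k$; $\mathrm{sgn}$ of an ordered partition of a set = sign of the permutation from natural order to the order listing the blocks successively, each increasingly. *)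

theory Defs
  imports Complex_Main
begin

text \<open>A vector bundle family A_1,...,A_n over a base (type 'm) is modelled by its fibres
  A i m, a linear subspace of an ambient real vector space 'a.\<close>

definition vb_family :: "nat \<Rightarrow> (nat \<Rightarrow> 'm \<Rightarrow> 'a::real_vector set) \<Rightarrow> bool" where
  "vb_family n A \<longleftrightarrow> (\<forall>i m. 1 \<le> i \<and> i \<le> n \<longrightarrow> subspace (A i m))"

definition set_less :: "nat set \<Rightarrow> nat set \<Rightarrow> bool" where
  "set_less I J \<longleftrightarrow> card I < card J \<or>
     (card I = card J \<and> (sorted_list_of_set I, sorted_list_of_set J) \<in> lexord {(x, y). x < y})"

definition canon_partitions :: "nat set \<Rightarrow> nat set list set" where
  "canon_partitions I = {\<rho>. (\<forall>K\<in>set \<rho>. K \<noteq> {}) \<and>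
      (\<forall>i<length \<rho>. \<forall>j<length \<rho>. i \<noteq> j \<longrightarrow> \<rho> ! i \<inter> \<rho> ! j = {}) \<and>
      \<Union>(set \<rho>) = I \<and> sorted_wrt set_less \<rho>}"

definition inversions :: "nat list \<Rightarrow> nat" where
  "inversions xs = card {(i, j). i < j \<and> j < length xs \<and> xs ! i > xs ! j}"

definition psgn :: "nat set list \<Rightarrow> real" where
  "psgn \<rho> = (-1) ^ inversions (concat (map sorted_list_of_set \<rho>))"

definition valid_tuple :: "nat \<Rightarrow> nat list \<Rightarrow> bool" where
  "valid_tuple n p \<longleftrightarrow> p \<noteq> [] \<and> sorted p \<and> (\<forall>i\<in>set p. 1 \<le> i) \<and> sum_list p \<le> n"

definition rho_can :: "nat list \<Rightarrow> nat set list" where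
  "rho_can p = map (\<lambda>j. {sum_list (take j p) + 1 .. sum_list (take (Suc j) p)}) [0..<length p]"

definition swap_adj :: "nat \<Rightarrow> 'x list \<Rightarrow> 'x list" where
  "swap_adj j xs = xs[j := xs ! Suc j, Suc j := xs ! j]"

text \<open>Arguments are
  passed as lists; this is a morphism of symmetric n-fold vector bundles E^A \<rightarrow> E^B.\<close>
definition sym_morphism ::
  "nat \<Rightarrow> (nat \<Rightarrow> 'm \<Rightarrow> 'a::real_vector set) \<Rightarrow> (nat \<Rightarrow> 'n \<Rightarrow> 'b::real_vector set) \<Rightarrow>
   ('m \<Rightarrow> 'n) \<Rightarrow> (nat list \<Rightarrow> 'a list \<Rightarrow> 'b) \<Rightarrow> bool" where
  "sym_morphism n A B tau0 tau \<longleftrightarrow>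
    (\<forall>p args m. valid_tuple n p \<and> length args = length p \<and> (\<forall>j<length p. args ! j \<in> A (p ! j) m) \<longrightarrow>
       tau p args \<in> B (sum_list p) (tau0 m) \<and>
       (\<forall>j<length p. \<forall>x\<in>A (p ! j) m. \<forall>y\<in>A (p ! j) m. \<forall>c::real.
          tau p (args[j := x + c *\<^sub>R y]) = tau p (args[j := x]) + c *\<^sub>R tau p (args[j := y])) \<and>
       (\<forall>j. Suc j < length p \<and> p ! j = p ! Suc j \<longrightarrow>
          tau p (swap_adj j args) = (if even (p ! j) then 1 else -1) *\<^sub>R tau p args))"

text \<open>Elements of the fibre of E^A(J) over m: families (a_I) for nonempty I \<subseteq> J with
  a_I in A_{#I} over m (extended by 0 outside).\<close>
definition in_E :: "(nat \<Rightarrow> 'm \<Rightarrow> 'a::real_vector set) \<Rightarrow> nat set \<Rightarrow> 'm \<Rightarrow> (nat set \<Rightarrow> 'a) \<Rightarrow> bool" where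
  "in_E A J m a \<longleftrightarrow> (\<forall>I. (I \<noteq> {} \<and> I \<subseteq> J \<longrightarrow> a I \<in> A (card I) m) \<and>
                          (\<not> (I \<noteq> {} \<and> I \<subseteq> J) \<longrightarrow> a I = 0))"

definition induced :: "(nat list \<Rightarrow> 'a list \<Rightarrow> 'b::real_vector) \<Rightarrow> nat set \<Rightarrow> (nat set \<Rightarrow> 'a) \<Rightarrow> nat set \<Rightarrow> 'b" where
  "induced tau J a I = (if I \<noteq> {} \<and> I \<subseteq> J
     then (\<Sum>\<rho>\<in>canon_partitions I. psgn \<rho> *\<^sub>R tau (map card \<rho>) (map a \<rho>)) else 0)"

definition comp_index :: "nat set list \<Rightarrow> nat set list list set" where
  "comp_index Ks = {\<rho>s. \<rho>s \<noteq> [] \<and>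
      (\<forall>\<rho>\<in>set \<rho>s. \<rho> \<noteq> [] \<and> \<rho> \<in> canon_partitions (\<Union>(set \<rho>))) \<and>
      distinct (concat \<rho>s) \<and> set (concat \<rho>s) = set Ks \<and>
      sorted_wrt set_less (map (\<lambda>\<rho>. \<Union>(set \<rho>)) \<rho>s)}"

text \<open>The components given by the formula of the theorem; args ! j = a_{K_j}.\<close>
definition comp_components ::
  "(nat list \<Rightarrow> 'b list \<Rightarrow> 'c::real_vector) \<Rightarrow> (nat list \<Rightarrow> 'a list \<Rightarrow> 'b) \<Rightarrow> nat list \<Rightarrow> 'a list \<Rightarrow> 'c" where
  "comp_components tau eta p args =
     (let Ks = rho_can p; a = (\<lambda>K. the (map_of (zip Ks args) K)) in
      (\<Sum>\<rho>s\<in>comp_index Ks. psgn (concat \<rho>s) *\<^sub>R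
          tau (map (\<lambda>\<rho>. card (\<Union>(set \<rho>))) \<rho>s)
              (map (\<lambda>\<rho>. eta (map card \<rho>) (map a \<rho>)) \<rho>s)))"

end

theory Submission
  imports Defs "HOL-Library.Multiset" "HOL-Library.List_Lexorder" "HOL-Library.Product_Lexorder"
begin

text \<open>Fix a subset I and expand both sides at I into signed sums.  On the left, multilinearity
  of the components of tau applied to the inner sums defining eta(J) gives a sum over a canonical
  partition rho of I together with a canonical partition of each block of rho; on the right one sums
  over a canonical partition pi of I together with a grouping of the blocks of pi.  Both index sets
  are the same set of two-level partitions of I, and the signs agree because the sign of the
  concatenated partition is sgn rho times the product of the signs of the inner partitions.  The
  formula itself is stated for the consecutive blocks rho^p_can; relabelling them to the blocks of
  pi costs the factor sgn pi, and bringing groups and blocks into canonical order is harmless: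
  transposing two adjacent entries of equal size c changes the sign by (-1)^(c*c), which is exactly
  the factor produced by the (skew-)symmetry of eta and tau.\<close>

section \<open>Inversions and signs of ordered partitions\<close>

lemma inversions_Nil [simp]: "inversions [] = 0"
  by (simp add: inversions_def)

lemma inversions_Cons [simp]:
  "inversions (x # xs) = length (filter (\<lambda>y. y < x) xs) + inversions xs"
proof -
  let ?S = "{(i, j). i < j \<and> j < length (x#xs) \<and> (x#xs) ! i > (x#xs) ! j}"
  let ?S' = "{(i, j). i < j \<and> j < length xs \<and> xs ! i > xs ! j}"
  let ?A = "{j. j < length xs \<and> xs ! j < x}"
  have eq: "?S = (\<lambda>j. (0, Suc j)) ` ?A \<union> (\<lambda>(i,j). (Suc i, Suc j)) ` ?S'"
  proof (rule set_eqI, clarify)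
    fix i j
    show "((i, j) \<in> ?S) = ((i, j) \<in> (\<lambda>j. (0, Suc j)) ` ?A \<union> (\<lambda>(i,j). (Suc i, Suc j)) ` ?S')"
      by (cases i; cases j) (auto simp: image_iff)
  qed
  have "finite ?S'" by (rule finite_subset[of _ "{..<length xs} \<times> {..<length xs}"]) auto
  then have "card ?S = card ((\<lambda>j. (0::nat, Suc j)) ` ?A) + card ((\<lambda>(i,j). (Suc i, Suc j)) ` ?S')"
    unfolding eq by (intro card_Un_disjoint) auto
  also have "card ((\<lambda>j. (0::nat, Suc j)) ` ?A) = card ?A"
    by (rule card_image) (auto simp: inj_on_def)
  also have "card ((\<lambda>(i,j). (Suc i, Suc j)) ` ?S') = card ?S'"
    by (rule card_image) (auto simp: inj_on_def)
  also have "card ?A = length (filter (\<lambda>y. y < x) xs)"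
    by (simp add: length_filter_conv_card)
  finally show ?thesis by (simp add: inversions_def)
qed

lemma inversions_sorted: "sorted xs \<Longrightarrow> inversions xs = 0"
  by (induction xs) (auto simp: filter_empty_conv)

definition cross_inversions :: "nat list \<Rightarrow> nat list \<Rightarrow> nat" where
  "cross_inversions xs ys = sum_list (map (\<lambda>x. length (filter (\<lambda>y. y < x) ys)) xs)"

lemma cross_inversions_Nil [simp]: "cross_inversions [] ys = 0" "cross_inversions xs [] = 0"
  by (induction xs) (simp_all add: cross_inversions_def)

lemma cross_inversions_Cons:
  "cross_inversions (x # xs) ys = length (filter (\<lambda>y. y < x) ys) + cross_inversions xs ys"
  by (simp add: cross_inversions_def)

lemma cross_inversions_append:
  "cross_inversions (xs @ ys) zs = cross_inversions xs zs + cross_inversions ys zs"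
  "cross_inversions xs (ys @ zs) = cross_inversions xs ys + cross_inversions xs zs"
  by (induction xs) (simp_all add: cross_inversions_def)

lemma inversions_append:
  "inversions (xs @ ys) = inversions xs + inversions ys + cross_inversions xs ys"
  by (induction xs) (auto simp: cross_inversions_Cons)

lemma cross_inversions_swap:
  "distinct (xs @ ys) \<Longrightarrow> cross_inversions xs ys + cross_inversions ys xs = length xs * length ys"
proof (induction xs)
  case Nil then show ?case by simp
next
  case (Cons x xs)
  have "cross_inversions ys [x] = length (filter (\<lambda>y. x < y) ys)"
    by (induction ys) (auto simp: cross_inversions_def)
  moreover have "length (filter (\<lambda>y. y < x) ys) + length (filter (\<lambda>y. x < y) ys) = length ys"
  proof -
    have "x \<notin> set ys" using Cons.prems by auto
    then have "filter (\<lambda>y. x < y) ys = filter (\<lambda>y. \<not> y < x) ys"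
      by (intro filter_cong) (auto, metis linorder_neqE_nat)
    then show ?thesis using sum_length_filter_compl[of "\<lambda>y. y < x" ys] by simp
  qed
  moreover have "cross_inversions ys (x # xs) = cross_inversions ys [x] + cross_inversions ys xs"
    using cross_inversions_append(2)[of ys "[x]" xs] by simp
  ultimately show ?case using Cons by (simp add: cross_inversions_Cons)
qed

lemma cross_inversions_eq_sum:
  "distinct xs \<Longrightarrow> distinct ys \<Longrightarrow>
     cross_inversions xs ys = (\<Sum>x\<in>set xs. card {y\<in>set ys. y < x})"
  by (simp add: cross_inversions_def sum_list_distinct_conv_sum_set distinct_length_filter)
     (intro sum.cong refl arg_cong[where f=card], auto)

lemma minus_one_power_inversions_swap:
  assumes "distinct (g @ h)"
  shows "(-1::real) ^ inversions (u @ h @ g @ v)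
           = (-1) ^ (length g * length h) * (-1) ^ inversions (u @ g @ h @ v)"
proof -
  have "inversions (u @ h @ g @ v) + 2 * cross_inversions g h
          = inversions (u @ g @ h @ v) + length g * length h"
    using cross_inversions_swap[OF assms]
    by (simp add: inversions_append cross_inversions_append)
  then have "(-1::real) ^ (inversions (u @ h @ g @ v) + 2 * cross_inversions g h)
               = (-1) ^ (inversions (u @ g @ h @ v) + length g * length h)"
    by simp
  then show ?thesis by (simp add: power_add power_mult mult.commute)
qed

abbreviation covered :: "nat set list \<Rightarrow> nat set" where
  "covered L \<equiv> \<Union>(set L)"

definition flat_blocks :: "nat set list \<Rightarrow> nat list" where
  "flat_blocks L = concat (map sorted_list_of_set L)"

lemma flat_blocks_simps [simp]:
  "flat_blocks [] = []"
  "flat_blocks (X # L) = sorted_list_of_set X @ flat_blocks L"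
  "flat_blocks (L @ L') = flat_blocks L @ flat_blocks L'"
  by (simp_all add: flat_blocks_def)

lemma flat_blocks_concat: "flat_blocks (concat Ls) = concat (map flat_blocks Ls)"
  by (induction Ls) auto

lemma psgn_flat_blocks: "psgn L = (-1) ^ inversions (flat_blocks L)"
  by (simp add: psgn_def flat_blocks_def)

lemma set_flat_blocks: "\<forall>X\<in>set L. finite X \<Longrightarrow> set (flat_blocks L) = covered L"
  by (induction L) auto

lemma length_flat_blocks:
  "\<forall>X\<in>set L. finite X \<Longrightarrow> distinct (flat_blocks L) \<Longrightarrow> length (flat_blocks L) = card (covered L)"
  by (metis distinct_card set_flat_blocks)

lemma psgn_mult_self: "psgn L * psgn L = 1"
  by (simp add: psgn_def power_mult_distrib[symmetric])

lemma psgn_swap_segments: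
  assumes "distinct (flat_blocks G @ flat_blocks H)" "\<forall>X\<in>set G. finite X" "\<forall>X\<in>set H. finite X"
  shows "psgn (A @ H @ G @ B) = (-1) ^ (card (covered G) * card (covered H)) * psgn (A @ G @ H @ B)"
proof -
  have "length (flat_blocks G) = card (covered G)" "length (flat_blocks H) = card (covered H)"
    using assms by (auto intro!: length_flat_blocks)
  then show ?thesis
    using minus_one_power_inversions_swap[OF assms(1), of "flat_blocks A" "flat_blocks B"]
    by (simp add: psgn_flat_blocks)
qed

lemma psgn_concat:
  assumes "\<forall>\<sigma>\<in>set \<sigma>s. \<forall>X\<in>set \<sigma>. finite X"
    and "distinct (flat_blocks (concat \<sigma>s))" and "distinct (flat_blocks (map covered \<sigma>s))"
  shows "psgn (concat \<sigma>s) = psgn (map covered \<sigma>s) * prod_list (map psgn \<sigma>s)"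
  using assms
proof (induction \<sigma>s)
  case Nil then show ?case by simp
next
  case (Cons \<sigma> \<sigma>s)
  have fin: "finite (covered \<sigma>)" using Cons.prems(1) by auto
  have d1: "distinct (flat_blocks \<sigma>)" "distinct (flat_blocks (concat \<sigma>s))"
    using Cons.prems(2) by (auto simp: flat_blocks_concat)
  have d2: "distinct (flat_blocks (map covered \<sigma>s))" using Cons.prems(3) by simp
  have s1: "set (flat_blocks \<sigma>) = covered \<sigma>" using Cons.prems(1) by (simp add: set_flat_blocks)
  have s2: "set (flat_blocks (concat \<sigma>s)) = \<Union>(covered ` set \<sigma>s)"
    using Cons.prems(1) by (subst set_flat_blocks) auto
  have s3: "set (flat_blocks (map covered \<sigma>s)) = \<Union>(covered ` set \<sigma>s)"
    using Cons.prems(1) by (subst set_flat_blocks) auto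
  \<comment> \<open>the inversions between a group and the later groups only see the union of the group\<close>
  have cross: "cross_inversions (flat_blocks \<sigma>) (flat_blocks (concat \<sigma>s))
      = cross_inversions (sorted_list_of_set (covered \<sigma>)) (flat_blocks (map covered \<sigma>s))"
    using d1 d2 fin s1 s2 s3 by (simp add: cross_inversions_eq_sum)
  have IH: "psgn (concat \<sigma>s) = psgn (map covered \<sigma>s) * prod_list (map psgn \<sigma>s)"
    using Cons by simp
  have "inversions (flat_blocks (concat (\<sigma> # \<sigma>s))) = inversions (flat_blocks \<sigma>)
      + inversions (flat_blocks (concat \<sigma>s)) + cross_inversions (flat_blocks \<sigma>) (flat_blocks (concat \<sigma>s))"
    by (simp add: inversions_append flat_blocks_concat)
  moreover have "inversions (flat_blocks (map covered (\<sigma> # \<sigma>s))) = inversions (flat_blocks (map covered \<sigma>s))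
      + cross_inversions (sorted_list_of_set (covered \<sigma>)) (flat_blocks (map covered \<sigma>s))"
    by (simp add: inversions_append inversions_sorted)
  moreover have psgn_eq: "psgn = (\<lambda>L. (-1) ^ inversions (flat_blocks L))"
    using psgn_flat_blocks by blast
  ultimately show ?case using IH cross by (simp add: psgn_eq power_add)
qed

section \<open>Adjacent transpositions\<close>

lemma swap_adj_append: "swap_adj (length us) (us @ a # b # vs) = us @ b # a # vs"
  by (simp add: swap_adj_def list_update_append nth_append)

lemma split_at_adjacent:
  assumes "Suc j < length xs"
  obtains us a b vs where "xs = us @ a # b # vs" "length us = j"
proof -
  have "xs = take j xs @ xs ! j # xs ! Suc j # drop (Suc (Suc j)) xs"
    using assms by (metis Cons_nth_drop_Suc Suc_lessD append_take_drop_id)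
  then show ?thesis using that[of "take j xs"] assms by simp
qed

lemma length_swap_adj [simp]: "length (swap_adj j xs) = length xs"
  by (simp add: swap_adj_def)

lemma map_swap_adj: "Suc j < length xs \<Longrightarrow> map f (swap_adj j xs) = swap_adj j (map f xs)"
  by (simp add: swap_adj_def map_update)

lemma swap_adj_same: "Suc j < length xs \<Longrightarrow> xs ! j = xs ! Suc j \<Longrightarrow> swap_adj j xs = xs"
  by (metis list_update_id swap_adj_def)

lemma mset_swap_adj:
  assumes "Suc j < length xs" shows "mset (swap_adj j xs) = mset xs"
proof -
  obtain us a b vs where "xs = us @ a # b # vs" "length us = j"
    using split_at_adjacent[OF assms] .
  then show ?thesis using swap_adj_append[of us a b vs] by (simp add: add_mset_commute)
qed

lemma set_swap_adj: "Suc j < length xs \<Longrightarrow> set (swap_adj j xs) = set xs"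
  by (metis mset_swap_adj set_mset_mset)

lemma psgn_swap_adj:
  assumes "Suc j < length L" "\<forall>X\<in>set L. finite X" "distinct (flat_blocks L)"
  shows "psgn (swap_adj j L) = (-1) ^ (card (L ! j) * card (L ! Suc j)) * psgn L"
proof -
  obtain us a b vs where L: "L = us @ a # b # vs" "length us = j"
    using split_at_adjacent[OF assms(1)] .
  then have "swap_adj j L = us @ [b] @ [a] @ vs" "L = us @ [a] @ [b] @ vs"
    "L ! j = a" "L ! Suc j = b"
    using swap_adj_append by (auto simp: nth_append)
  moreover have "distinct (flat_blocks [a] @ flat_blocks [b])" using assms(3) L by auto
  ultimately show ?thesis using psgn_swap_segments[of "[a]" "[b]" us vs] assms(2) L by simp
qed

lemma move_to_front_invariant:
  fixes key :: "'x \<Rightarrow> 'k::linorder"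
  assumes "\<And>zs j. mset zs = mset (us @ x # vs) \<Longrightarrow> sorted (map key zs) \<Longrightarrow> Suc j < length zs \<Longrightarrow>
             key (zs ! j) = key (zs ! Suc j) \<Longrightarrow> f (swap_adj j zs) = f zs"
    and "\<forall>u\<in>set us. key u = key x" and "sorted (map key (us @ x # vs))"
  shows "f (us @ x # vs) = f (x # us @ vs)"
  using assms
proof (induction us arbitrary: f)
  case Nil then show ?case by simp
next
  case (Cons u us)
  have ku: "key u = key x" using Cons.prems(2) by simp
  have minx: "\<forall>z\<in>set (us @ x # vs). key x \<le> key z"
    using Cons.prems(2,3) by (auto simp: sorted_append)
  have "(\<lambda>l. f (u # l)) (us @ x # vs) = (\<lambda>l. f (u # l)) (x # us @ vs)"
  proof (rule Cons.IH)
    fix zs j assume a: "mset zs = mset (us @ x # vs)" "sorted (map key zs)" "Suc j < length zs"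
      "key (zs ! j) = key (zs ! Suc j)"
    have sz: "set zs = set (us @ x # vs)" using a(1) by (metis mset_eq_setD)
    have "f (swap_adj (Suc j) (u # zs)) = f (u # zs)"
      by (rule Cons.prems(1)) (use a sz minx ku in auto)
    then show "f (u # swap_adj j zs) = f (u # zs)" by (simp add: swap_adj_def)
  qed (use Cons.prems(2,3) in auto)
  then have "f (u # us @ x # vs) = f (u # x # us @ vs)" by simp
  also have "\<dots> = f (swap_adj 0 (u # x # us @ vs))"
  proof (rule sym, rule Cons.prems(1))
    show "sorted (map key (u # x # us @ vs))"
      using Cons.prems(2,3) ku by (auto simp: sorted_append)
  qed (use ku in auto)
  also have "\<dots> = f (x # (u # us) @ vs)" by (simp add: swap_adj_def)
  finally show ?case by simp
qed

lemma sorted_perm_invariant: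
  fixes key :: "'x \<Rightarrow> 'k::linorder"
  assumes "\<And>zs j. mset zs = mset xs \<Longrightarrow> sorted (map key zs) \<Longrightarrow> Suc j < length zs \<Longrightarrow>
             key (zs ! j) = key (zs ! Suc j) \<Longrightarrow> f (swap_adj j zs) = f zs"
    and "mset ys = mset xs" and "sorted (map key xs)" and "sorted (map key ys)"
  shows "f ys = f xs"
  using assms
proof (induction xs arbitrary: ys f)
  case Nil then show ?case by auto
next
  case (Cons x xs)
  have "x \<in> set ys" using Cons.prems(2) by (metis list.set_intros(1) mset_eq_setD)
  then obtain us vs where ys: "ys = us @ x # vs" "x \<notin> set us" by (meson split_list_first)
  have minx: "\<forall>z\<in>set xs. key x \<le> key z" using Cons.prems(3) by simp
  have sy: "set ys = set (x # xs)" using Cons.prems(2) by (metis mset_eq_setD)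
  have kus: "\<forall>u\<in>set us. key u = key x"
  proof
    fix u assume u: "u \<in> set us"
    have "key u \<le> key x" using Cons.prems(4) u ys by (auto simp: sorted_append)
    moreover have "u \<in> set (x # xs)" using sy ys u by auto
    then have "key x \<le> key u" using minx by auto
    ultimately show "key u = key x" by simp
  qed
  have "f ys = f (x # us @ vs)"
    unfolding ys(1) by (rule move_to_front_invariant) (use Cons.prems ys kus in auto)
  also have "(\<lambda>l. f (x # l)) (us @ vs) = (\<lambda>l. f (x # l)) xs"
  proof (rule Cons.IH)
    fix zs j assume a: "mset zs = mset xs" "sorted (map key zs)" "Suc j < length zs"
      "key (zs ! j) = key (zs ! Suc j)"
    have sz: "set zs = set xs" using a(1) by (metis mset_eq_setD)
    have "f (swap_adj (Suc j) (x # zs)) = f (x # zs)"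
      by (rule Cons.prems(1)) (use a sz minx in auto)
    then show "f (x # swap_adj j zs) = f (x # zs)" by (simp add: swap_adj_def)
  qed (use Cons.prems ys in \<open>auto simp: sorted_append\<close>)
  finally show ?case by simp
qed

section \<open>Multilinearity of the components of a morphism\<close>

definition in_fibres ::
  "(nat \<Rightarrow> 'm \<Rightarrow> 'a::real_vector set) \<Rightarrow> nat list \<Rightarrow> 'a list \<Rightarrow> 'm \<Rightarrow> bool" where
  "in_fibres A p args m \<longleftrightarrow> length args = length p \<and> (\<forall>j<length p. args ! j \<in> A (p ! j) m)"

lemma in_fibres_append_iff:
  "in_fibres A p (pre @ xs) m \<longleftrightarrow> length pre + length xs = length p \<and>
     (\<forall>j<length pre. pre ! j \<in> A (p ! j) m) \<and> (\<forall>i<length xs. xs ! i \<in> A (p ! (length pre + i)) m)"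
  unfolding in_fibres_def
proof
  assume h: "length (pre @ xs) = length p \<and> (\<forall>j<length p. (pre @ xs) ! j \<in> A (p ! j) m)"
  show "length pre + length xs = length p \<and>
     (\<forall>j<length pre. pre ! j \<in> A (p ! j) m) \<and> (\<forall>i<length xs. xs ! i \<in> A (p ! (length pre + i)) m)"
  proof (intro conjI allI impI)
    fix j assume "j < length pre"
    then show "pre ! j \<in> A (p ! j) m" using h[THEN conjunct2, rule_format, of j] h by (simp add: nth_append)
  next
    fix i assume "i < length xs"
    then show "xs ! i \<in> A (p ! (length pre + i)) m"
      using h[THEN conjunct2, rule_format, of "length pre + i"] h by (simp add: nth_append)
  qed (use h in simp)
next
  assume h: "length pre + length xs = length p \<and>
     (\<forall>j<length pre. pre ! j \<in> A (p ! j) m) \<and> (\<forall>i<length xs. xs ! i \<in> A (p ! (length pre + i)) m)"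
  show "length (pre @ xs) = length p \<and> (\<forall>j<length p. (pre @ xs) ! j \<in> A (p ! j) m)"
  proof (intro conjI allI impI)
    fix j assume "j < length p"
    then show "(pre @ xs) ! j \<in> A (p ! j) m"
      using h h[THEN conjunct2, THEN conjunct2, rule_format, of "j - length pre"]
      by (cases "j < length pre") (auto simp: nth_append)
  qed (use h in simp)
qed

lemma valid_tuple_entry: "valid_tuple n p \<Longrightarrow> j < length p \<Longrightarrow> 1 \<le> p ! j \<and> p ! j \<le> n"
  unfolding valid_tuple_def by (metis elem_le_sum_list nth_mem order_trans)

context
  fixes n :: nat and A :: "nat \<Rightarrow> 'm \<Rightarrow> 'a::real_vector set" and B :: "nat \<Rightarrow> 'n \<Rightarrow> 'b::real_vector set"
    and t0 :: "'m \<Rightarrow> 'n" and t :: "nat list \<Rightarrow> 'a list \<Rightarrow> 'b"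
  assumes morphism: "sym_morphism n A B t0 t" and family: "vb_family n A"
begin

lemma component_subspace: "valid_tuple n p \<Longrightarrow> j < length p \<Longrightarrow> subspace (A (p ! j) m)"
  using family valid_tuple_entry unfolding vb_family_def by blast

lemma component_fibre:
  "valid_tuple n p \<Longrightarrow> in_fibres A p args m \<Longrightarrow> t p args \<in> B (sum_list p) (t0 m)"
  using morphism unfolding sym_morphism_def in_fibres_def by blast

lemma component_linear:
  "valid_tuple n p \<Longrightarrow> in_fibres A p args m \<Longrightarrow> j < length p \<Longrightarrow> x \<in> A (p ! j) m \<Longrightarrow> y \<in> A (p ! j) m
   \<Longrightarrow> t p (args[j := x + c *\<^sub>R y]) = t p (args[j := x]) + c *\<^sub>R t p (args[j := y])"
  using morphism unfolding sym_morphism_def in_fibres_def by blast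

lemma component_swap:
  "valid_tuple n p \<Longrightarrow> in_fibres A p args m \<Longrightarrow> Suc j < length p \<Longrightarrow> p ! j = p ! Suc j
   \<Longrightarrow> t p (swap_adj j args) = (if even (p ! j) then 1 else -1) *\<^sub>R t p args"
  using morphism unfolding sym_morphism_def in_fibres_def by blast

lemma component_zero:
  assumes "valid_tuple n p" "in_fibres A p args m" "j < length p"
  shows "t p (args[j := 0]) = 0"
proof -
  have z: "0 \<in> A (p ! j) m" using component_subspace[OF assms(1,3)] real_vector.subspace_0 by blast
  have "t p (args[j := 0 + 1 *\<^sub>R 0]) = t p (args[j := 0]) + 1 *\<^sub>R t p (args[j := 0])"
    by (rule component_linear[OF assms z z])
  then show ?thesis by simp
qed

lemma component_scale:
  assumes "valid_tuple n p" "in_fibres A p args m" "j < length p" "y \<in> A (p ! j) m"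
  shows "t p (args[j := c *\<^sub>R y]) = c *\<^sub>R t p (args[j := y])"
proof -
  have z: "0 \<in> A (p ! j) m" using component_subspace[OF assms(1,3)] real_vector.subspace_0 by blast
  have "t p (args[j := 0 + c *\<^sub>R y]) = t p (args[j := 0]) + c *\<^sub>R t p (args[j := y])"
    by (rule component_linear[OF assms(1-3) z assms(4)])
  then show ?thesis using component_zero[OF assms(1-3)] by simp
qed

lemma component_sum:
  assumes "valid_tuple n p" "in_fibres A p args m" "j < length p" "finite S"
    "\<forall>x\<in>S. g x \<in> A (p ! j) m"
  shows "t p (args[j := (\<Sum>x\<in>S. g x)]) = (\<Sum>x\<in>S. t p (args[j := g x]))"
  using assms(4,5)
proof (induction S rule: finite_induct)
  case empty then show ?case using component_zero[OF assms(1-3)] by simp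
next
  case (insert x S)
  have "(\<Sum>x\<in>S. g x) \<in> A (p ! j) m"
    by (rule real_vector.subspace_sum[OF component_subspace[OF assms(1,3)]]) (use insert.prems in auto)
  then have "t p (args[j := g x + 1 *\<^sub>R (\<Sum>x\<in>S. g x)])
      = t p (args[j := g x]) + 1 *\<^sub>R t p (args[j := (\<Sum>x\<in>S. g x)])"
    by (intro component_linear[OF assms(1-3)]) (use insert.prems in auto)
  with insert show ?case by simp
qed

lemma in_fibres_append_sums:
  assumes "valid_tuple n p" "length pre + length Ss = length p"
    "\<forall>j<length pre. pre ! j \<in> A (p ! j) m"
    "\<forall>i<length Ss. finite (Ss ! i) \<and> (\<forall>x\<in>Ss ! i. g x \<in> A (p ! (length pre + i)) m)"
  shows "in_fibres A p (pre @ map (\<lambda>S. \<Sum>x\<in>S. g x) Ss) m"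
  unfolding in_fibres_append_iff
proof (intro conjI allI impI)
  fix i assume i: "i < length (map (\<lambda>S. \<Sum>x\<in>S. g x) Ss)"
  have "subspace (A (p ! (length pre + i)) m)"
    using component_subspace[OF assms(1)] i assms(2) by simp
  then have "(\<Sum>x\<in>Ss ! i. g x) \<in> A (p ! (length pre + i)) m"
    using assms(4) i by (simp add: real_vector.subspace_sum)
  then show "map (\<lambda>S. \<Sum>x\<in>S. g x) Ss ! i \<in> A (p ! (length pre + i)) m"
    using i by (simp only: length_map nth_map)
qed (use assms in auto)

lemma component_expand_sums:
  assumes "valid_tuple n p" "length pre + length Ss = length p"
    "\<forall>j<length pre. pre ! j \<in> A (p ! j) m"
    "\<forall>i<length Ss. finite (Ss ! i) \<and> (\<forall>x\<in>Ss ! i. g x \<in> A (p ! (length pre + i)) m)"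
  shows "t p (pre @ map (\<lambda>S. \<Sum>x\<in>S. g x) Ss) = (\<Sum>xs\<in>listset Ss. t p (pre @ map g xs))"
  using assms(2-4)
proof (induction Ss arbitrary: pre)
  case Nil then show ?case by simp
next
  case (Cons S Ss)
  let ?sum = "\<lambda>S. \<Sum>x\<in>S. g x"
  let ?args = "pre @ map ?sum (S # Ss)"
  have j: "length pre < length p" using Cons.prems(1) by simp
  have S: "finite S" "\<forall>x\<in>S. g x \<in> A (p ! length pre) m" using Cons.prems(3) by force+
  have tail: "\<forall>i<length Ss. finite (Ss ! i) \<and> (\<forall>y\<in>Ss ! i. g y \<in> A (p ! Suc (length pre + i)) m)"
  proof (intro allI impI)
    fix i assume "i < length Ss"
    then show "finite (Ss ! i) \<and> (\<forall>y\<in>Ss ! i. g y \<in> A (p ! Suc (length pre + i)) m)"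
      using Cons.prems(3)[rule_format, of "Suc i"] by simp
  qed
  have "in_fibres A p ?args m"
    by (rule in_fibres_append_sums[OF assms(1) Cons.prems])
  then have "t p ?args = (\<Sum>x\<in>S. t p (?args[length pre := g x]))"
    using component_sum[OF assms(1) _ j S] by (metis list.simps(9) nth_append_length list_update_id)
  also have "\<dots> = (\<Sum>x\<in>S. \<Sum>xs\<in>listset Ss. t p ((pre @ [g x]) @ map g xs))"
  proof (rule sum.cong[OF refl])
    fix x assume "x \<in> S"
    then have "t p ((pre @ [g x]) @ map ?sum Ss) = (\<Sum>xs\<in>listset Ss. t p ((pre @ [g x]) @ map g xs))"
      using Cons.prems(1,2) S tail by (intro Cons.IH) (auto simp: nth_append less_Suc_eq)
    then show "t p (?args[length pre := g x]) = (\<Sum>xs\<in>listset Ss. t p ((pre @ [g x]) @ map g xs))"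
      by simp
  qed
  also have "\<dots> = (\<Sum>(x, xs)\<in>S \<times> listset Ss. t p (pre @ map g (x # xs)))"
    by (simp add: sum.cartesian_product)
  also have "\<dots> = (\<Sum>ys\<in>(\<lambda>(x, xs). x # xs) ` (S \<times> listset Ss). t p (pre @ map g ys))"
    by (subst sum.reindex) (auto simp: inj_on_def intro!: sum.cong)
  also have "(\<lambda>(x, xs). x # xs) ` (S \<times> listset Ss) = listset (S # Ss)"
    by (auto simp: set_Cons_def image_iff)
  finally show ?case .
qed

lemma component_scalars:
  assumes "valid_tuple n p" "length pre + length xs = length p"
    "\<forall>j<length pre. pre ! j \<in> A (p ! j) m"
    "\<forall>i<length xs. e (xs ! i) \<in> A (p ! (length pre + i)) m"
  shows "t p (pre @ map (\<lambda>x. c x *\<^sub>R e x) xs) = prod_list (map c xs) *\<^sub>R t p (pre @ map e xs)"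
  using assms(2-4)
proof (induction xs arbitrary: pre)
  case Nil then show ?case by simp
next
  case (Cons x xs)
  have j: "length pre < length p" using Cons.prems(1) by simp
  have ex: "e x \<in> A (p ! length pre) m" using Cons.prems(3) by force
  then have cx: "c x *\<^sub>R e x \<in> A (p ! length pre) m"
    using component_subspace[OF assms(1) j] real_vector.subspace_scale by blast
  have tail: "\<forall>i<length xs. e (xs ! i) \<in> A (p ! Suc (length pre + i)) m"
    using Cons.prems(3) by (metis add_Suc_right length_Cons not_less_eq nth_Cons_Suc)
  have "t p ((pre @ [c x *\<^sub>R e x]) @ map (\<lambda>x. c x *\<^sub>R e x) xs)
      = prod_list (map c xs) *\<^sub>R t p ((pre @ [c x *\<^sub>R e x]) @ map e xs)"
    using Cons.prems(1,2) cx tail by (intro Cons.IH) (auto simp: nth_append less_Suc_eq)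
  moreover have "in_fibres A p (pre @ map e (x # xs)) m"
    using Cons.prems by (auto simp: in_fibres_append_iff simp del: list.map)
  then have "t p ((pre @ map e (x # xs))[length pre := c x *\<^sub>R e x])
      = c x *\<^sub>R t p ((pre @ map e (x # xs))[length pre := e x])"
    by (rule component_scale[OF assms(1) _ j ex])
  ultimately show ?case by simp
qed

end

section \<open>The canonical order on sets and lists of disjoint blocks\<close>

definition set_key :: "nat set \<Rightarrow> nat \<times> nat list" where
  "set_key X = (card X, sorted_list_of_set X)"

lemma set_less_set_key: "set_less X Y \<longleftrightarrow> set_key X < set_key Y"
  by (auto simp: set_less_def set_key_def list_less_def less_prod_def')

lemma set_key_inj: "finite X \<Longrightarrow> finite Y \<Longrightarrow> set_key X = set_key Y \<Longrightarrow> X = Y"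
  by (metis prod.inject set_sorted_list_of_set set_key_def)

lemma sorted_wrt_key_unique:
  fixes f :: "'x \<Rightarrow> 'k::linorder"
  assumes "sorted_wrt (\<lambda>x y. f x < f y) xs" "sorted_wrt (\<lambda>x y. f x < f y) ys" "set xs = set ys"
  shows "xs = ys"
  using assms
proof (induction xs arbitrary: ys)
  case Nil then show ?case by simp
next
  case (Cons x xs)
  then obtain y ys' where ys: "ys = y # ys'" by (cases ys) auto
  have "x = y"
  proof (rule ccontr)
    assume ne: "x \<noteq> y"
    have "x \<in> set ys'" using Cons.prems(3) ys ne by (metis list.set_intros(1) set_ConsD)
    then have "f y < f x" using Cons.prems(2) ys by auto
    moreover have "y \<in> set xs" using Cons.prems(3) ys ne by (metis list.set_intros(1) set_ConsD)
    then have "f x < f y" using Cons.prems(1) by auto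
    ultimately show False by simp
  qed
  moreover have "x \<notin> set xs" using Cons.prems(1) by auto
  moreover have "y \<notin> set ys'" using Cons.prems(2) ys by auto
  ultimately have "set xs = set ys'" using Cons.prems(3) ys by auto
  then show ?case using Cons ys \<open>x = y\<close> by simp
qed

lemma set_less_eq_set_key: "set_less = (\<lambda>x y. set_key x < set_key y)"
  by (intro ext) (simp add: set_less_set_key)

lemma set_less_unique:
  "sorted_wrt set_less xs \<Longrightarrow> sorted_wrt set_less ys \<Longrightarrow> set xs = set ys \<Longrightarrow> xs = ys"
  using sorted_wrt_key_unique[of set_key xs ys] by (simp add: set_less_eq_set_key)

lemma sorted_wrt_key_less_iff:
  fixes f :: "'x \<Rightarrow> 'k::linorder"
  shows "sorted_wrt (\<lambda>x y. f x < f y) xs \<longleftrightarrow> sorted (map f xs) \<and> distinct (map f xs)"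
  using strict_sorted_iff[of "map f xs"] unfolding sorted_wrt_map by simp

lemma sorted_card_of_set_less: "sorted_wrt set_less L \<Longrightarrow> sorted (map card L)"
proof -
  assume "sorted_wrt set_less L"
  then have "sorted_wrt (\<lambda>x y. card x \<le> card y) L"
    by (rule sorted_wrt_mono_rel[rotated]) (auto simp: set_less_def)
  then show ?thesis by (simp add: sorted_wrt_map sorted_map)
qed

lemma sorted_wrt_set_less_sort_key:
  assumes "\<forall>X\<in>set L. finite X" "distinct L"
  shows "sorted_wrt set_less (sort_key set_key L)"
proof -
  have "distinct (map set_key (sort_key set_key L))"
  proof -
    have "inj_on set_key (set L)" using assms(1) set_key_inj by (auto simp: inj_on_def)
    then show ?thesis using assms(2) by (simp add: distinct_map)
  qed
  then show ?thesis unfolding set_less_eq_set_key sorted_wrt_key_less_iff by simp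
qed

lemma set_key_le_card: "set_key X \<le> set_key Y \<Longrightarrow> card X \<le> card Y"
  by (auto simp: set_key_def less_eq_prod_def)

lemma sorted_set_key_card: "sorted (map set_key L) \<Longrightarrow> sorted (map card L)"
proof -
  assume "sorted (map set_key L)"
  then have "sorted_wrt (\<lambda>x y. set_key x \<le> set_key y) L" by (simp add: sorted_wrt_map)
  then have "sorted_wrt (\<lambda>x y. card x \<le> card y) L"
    by (rule sorted_wrt_mono_rel[rotated]) (auto intro: set_key_le_card)
  then show ?thesis by (simp add: sorted_wrt_map)
qed

definition pairwise_disjoint :: "nat set list \<Rightarrow> bool" where
  "pairwise_disjoint L \<longleftrightarrow> (\<forall>i<length L. \<forall>j<length L. i \<noteq> j \<longrightarrow> L ! i \<inter> L ! j = {})"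

lemma pairwise_disjoint_Nil [simp]: "pairwise_disjoint []" by (simp add: pairwise_disjoint_def)

lemma pairwise_disjoint_Cons:
  "pairwise_disjoint (X # L) \<longleftrightarrow> X \<inter> covered L = {} \<and> pairwise_disjoint L"
proof
  assume a: "pairwise_disjoint (X # L)"
  have "X \<inter> L ! j = {}" if "j < length L" for j
    using a that unfolding pairwise_disjoint_def
    by (metis Suc_less_eq length_Cons nat.distinct(1) nth_Cons_0 nth_Cons_Suc zero_less_Suc)
  then have "X \<inter> covered L = {}" unfolding set_conv_nth by blast
  moreover have "pairwise_disjoint L" using a unfolding pairwise_disjoint_def
    by (metis Suc_less_eq length_Cons nat.inject nth_Cons_Suc)
  ultimately show "X \<inter> covered L = {} \<and> pairwise_disjoint L" by simp
next
  assume a: "X \<inter> covered L = {} \<and> pairwise_disjoint L"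
  show "pairwise_disjoint (X # L)" unfolding pairwise_disjoint_def
  proof (intro allI impI)
    fix i j assume ij: "i < length (X # L)" "j < length (X # L)" "i \<noteq> j"
    have "X \<inter> L ! k = {}" if "k < length L" for k
      using a that by (auto simp: set_conv_nth)
    then show "(X # L) ! i \<inter> (X # L) ! j = {}"
      using a ij by (cases i; cases j) (auto simp: pairwise_disjoint_def)
  qed
qed

lemma pairwise_disjoint_flat_blocks:
  "\<forall>X\<in>set L. finite X \<Longrightarrow> pairwise_disjoint L \<longleftrightarrow> distinct (flat_blocks L)"
  by (induction L) (auto simp: pairwise_disjoint_Cons set_flat_blocks)

definition disjoint_blocks :: "nat set list \<Rightarrow> bool" where
  "disjoint_blocks L \<longleftrightarrow> (\<forall>X\<in>set L. X \<noteq> {} \<and> finite X) \<and> distinct (flat_blocks L)"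

lemma disjoint_blocks_pairwise_disjoint: "disjoint_blocks L \<Longrightarrow> pairwise_disjoint L"
  by (simp add: disjoint_blocks_def pairwise_disjoint_flat_blocks)

lemma disjoint_blocks_distinct: "disjoint_blocks L \<Longrightarrow> distinct L"
proof -
  assume g: "disjoint_blocks L"
  have "pairwise_disjoint L" using disjoint_blocks_pairwise_disjoint[OF g] .
  show "distinct L" unfolding distinct_conv_nth
  proof (intro allI impI)
    fix i j assume "i < length L" "j < length L" "i \<noteq> j"
    then have "L ! i \<inter> L ! j = {}" "L ! i \<noteq> {}" using \<open>pairwise_disjoint L\<close> g by (auto simp: pairwise_disjoint_def disjoint_blocks_def)
    then show "L ! i \<noteq> L ! j" by auto
  qed
qed

lemma disjoint_blocks_disjoint:
  "disjoint_blocks L \<Longrightarrow> X \<in> set L \<Longrightarrow> Y \<in> set L \<Longrightarrow> X \<noteq> Y \<Longrightarrow> X \<inter> Y = {}"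
  using disjoint_blocks_pairwise_disjoint unfolding pairwise_disjoint_def by (metis in_set_conv_nth)

lemma disjoint_blocks_subset:
  assumes "disjoint_blocks Ks" "distinct L" "set L \<subseteq> set Ks"
  shows "disjoint_blocks L"
proof -
  have fin: "\<forall>X\<in>set L. X \<noteq> {} \<and> finite X" using assms unfolding disjoint_blocks_def by auto
  have "pairwise_disjoint L" unfolding pairwise_disjoint_def
  proof (intro allI impI)
    fix i j assume "i < length L" "j < length L" "i \<noteq> j"
    then have "L ! i \<noteq> L ! j" "L ! i \<in> set Ks" "L ! j \<in> set Ks"
      using assms(2,3) nth_eq_iff_index_eq by auto
    then show "L ! i \<inter> L ! j = {}" using disjoint_blocks_disjoint[OF assms(1)] by blast
  qed
  then show ?thesis using fin pairwise_disjoint_flat_blocks[of L] by (simp add: disjoint_blocks_def)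
qed

lemma mset_concat_perm: "mset L = mset L' \<Longrightarrow> mset (concat L) = mset (concat L')"
proof -
  have "mset (concat L) = sum_mset (image_mset mset (mset L))" for L :: "'x list list"
    by (induction L) auto
  then show "mset L = mset L' \<Longrightarrow> mset (concat L) = mset (concat L')" by metis
qed

lemma mset_flat_blocks_perm: "mset L = mset L' \<Longrightarrow> mset (flat_blocks L) = mset (flat_blocks L')"
  unfolding flat_blocks_def by (rule mset_concat_perm) simp

lemma disjoint_blocks_perm: "disjoint_blocks L \<Longrightarrow> mset L = mset L' \<Longrightarrow> disjoint_blocks L'"
  unfolding disjoint_blocks_def using mset_flat_blocks_perm mset_eq_imp_distinct_iff mset_eq_setD by metis

lemma canon_partitions_iff: "finite I \<Longrightarrow> \<rho> \<in> canon_partitions I \<longleftrightarrow>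
   (\<forall>K\<in>set \<rho>. K \<noteq> {}) \<and> distinct (flat_blocks \<rho>) \<and> \<Union>(set \<rho>) = I \<and> sorted_wrt set_less \<rho>"
proof -
  assume fI: "finite I"
  have "\<Union>(set \<rho>) = I \<Longrightarrow> \<forall>X\<in>set \<rho>. finite X" using fI by (auto intro: finite_subset)
  then show ?thesis unfolding canon_partitions_def using pairwise_disjoint_flat_blocks[of \<rho>] by (auto simp: pairwise_disjoint_def)
qed

lemma canon_partitions_disjoint_blocks: "finite I \<Longrightarrow> \<rho> \<in> canon_partitions I \<Longrightarrow> disjoint_blocks \<rho>"
  by (auto simp: canon_partitions_iff disjoint_blocks_def intro: finite_subset)

lemma canon_partitions_finite: assumes "finite I" shows "finite (canon_partitions I)"
proof -
  have "canon_partitions I \<subseteq> {xs. set xs \<subseteq> Pow I \<and> length xs \<le> card (Pow I)}"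
  proof
    fix \<rho> assume r: "\<rho> \<in> canon_partitions I"
    have "distinct \<rho>" using disjoint_blocks_distinct[OF canon_partitions_disjoint_blocks[OF assms r]] .
    moreover have "set \<rho> \<subseteq> Pow I" using r unfolding canon_partitions_def by auto
    ultimately have "length \<rho> \<le> card (Pow I)"
      by (metis distinct_card card_mono finite_Pow_iff assms)
    then show "\<rho> \<in> {xs. set xs \<subseteq> Pow I \<and> length xs \<le> card (Pow I)}" using \<open>set \<rho> \<subseteq> Pow I\<close> by simp
  qed
  then show ?thesis using finite_lists_length_le[of "Pow I" "card (Pow I)"] assms
    by (auto intro: finite_subset)
qed

lemma covered_canon_partitions: "\<sigma> \<in> canon_partitions K \<Longrightarrow> covered \<sigma> = K"
  by (simp add: canon_partitions_def)

lemma canon_partitions_sorted_card: "\<rho> \<in> canon_partitions I \<Longrightarrow> sorted (map card \<rho>)"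
  by (simp add: canon_partitions_def sorted_card_of_set_less)

lemma disjoint_blocks_card_covered: "disjoint_blocks L \<Longrightarrow> card (covered L) = sum_list (map card L)"
proof -
  assume "disjoint_blocks L"
  then have "length (flat_blocks L) = card (covered L)"
    by (intro length_flat_blocks) (auto simp: disjoint_blocks_def)
  moreover have "length (flat_blocks L) = sum_list (map card L)" by (induction L) auto
  ultimately show ?thesis by simp
qed

lemma mset_concat_map: "\<forall>h\<in>set L. mset (f h) = mset h \<Longrightarrow> mset (concat (map f L)) = mset (concat L)"
  by (induction L) auto

lemma mset_flat_blocks_covered:
  assumes "\<forall>h\<in>set L. distinct (flat_blocks h) \<and> (\<forall>X\<in>set h. finite X)"
  shows "mset (flat_blocks (concat L)) = mset (flat_blocks (map covered L))"
  using assms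
proof (induction L)
  case Nil then show ?case by simp
next
  case (Cons h L)
  then have "finite (covered h)" "set (flat_blocks h) = covered h" "distinct (flat_blocks h)"
    by (auto simp: set_flat_blocks)
  then have "mset (sorted_list_of_set (covered h)) = mset (flat_blocks h)"
    by (simp add: set_eq_iff_mset_eq_distinct[symmetric])
  with Cons show ?case by (simp add: flat_blocks_concat)
qed

lemma distinct_flat_blocks_covered:
  assumes "\<forall>h\<in>set L. \<forall>X\<in>set h. finite X" "distinct (flat_blocks (concat L))"
  shows "distinct (flat_blocks (map covered L))"
proof -
  have "\<forall>h\<in>set L. distinct (flat_blocks h)"
    using assms(2) by (auto simp: flat_blocks_concat distinct_concat_iff)
  then show ?thesis
    using assms mset_flat_blocks_covered[of L] mset_eq_imp_distinct_iff by metis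
qed

section \<open>The index set of the composition formula\<close>

definition sort_blocks :: "nat set list \<Rightarrow> nat set list" where
  "sort_blocks = sort_key set_key"

definition normalize_groups :: "nat set list list \<Rightarrow> nat set list list" where
  "normalize_groups hs = sort_key (\<lambda>h. set_key (covered h)) (map sort_blocks hs)"

definition grouping :: "nat set list \<Rightarrow> nat set list list \<Rightarrow> bool" where
  "grouping Ks hs \<longleftrightarrow>
     hs \<noteq> [] \<and> (\<forall>h\<in>set hs. h \<noteq> []) \<and> distinct (concat hs) \<and> set (concat hs) = set Ks"

lemma sorted_set_key_covered_card:
  "sorted (map (\<lambda>h. set_key (covered h)) L) \<Longrightarrow> sorted (map (\<lambda>h. card (covered h)) L)"
  using sorted_set_key_card[of "map covered L"] by (simp add: comp_def)

lemma sort_blocks_sorted_card: "sorted (map card (sort_blocks g))"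
  by (rule sorted_set_key_card) (simp add: sort_blocks_def)

lemma comp_index_grouping: "hs \<in> comp_index Ks \<Longrightarrow> grouping Ks hs"
  by (simp add: comp_index_def grouping_def)

lemma grouping_disjoint_blocks_concat:
  "disjoint_blocks Ks \<Longrightarrow> grouping Ks hs \<Longrightarrow> disjoint_blocks (concat hs)"
  by (rule disjoint_blocks_subset) (auto simp: grouping_def)

lemma grouping_group_disjoint_blocks:
  assumes "disjoint_blocks Ks" "grouping Ks L" "\<rho> \<in> set L"
  shows "disjoint_blocks \<rho>"
proof (rule disjoint_blocks_subset[OF assms(1)])
  show "distinct \<rho>" using assms(2,3) by (auto simp: grouping_def distinct_concat_iff)
  show "set \<rho> \<subseteq> set Ks" using assms(2,3) by (auto simp: grouping_def)
qed

lemma grouping_disjoint_blocks_covered: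
  assumes "disjoint_blocks Ks" "grouping Ks hs"
  shows "disjoint_blocks (map covered hs)"
proof -
  have g: "disjoint_blocks (concat hs)" using grouping_disjoint_blocks_concat[OF assms] .
  have fin: "\<forall>h\<in>set hs. \<forall>X\<in>set h. finite X" using g by (auto simp: disjoint_blocks_def)
  have "distinct (flat_blocks (map covered hs))"
    by (rule distinct_flat_blocks_covered[OF fin]) (use g in \<open>simp add: disjoint_blocks_def\<close>)
  moreover have "\<forall>X\<in>set (map covered hs). X \<noteq> {} \<and> finite X"
  proof
    fix X assume "X \<in> set (map covered hs)"
    then obtain h where h: "h \<in> set hs" "X = covered h" by auto
    have "h \<noteq> []" using assms(2) h by (simp add: grouping_def)
    then obtain Y where "Y \<in> set h" using last_in_set by blast
    then have "Y \<noteq> {}" using g h by (auto simp: disjoint_blocks_def)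
    then show "X \<noteq> {} \<and> finite X" using h \<open>Y \<in> set h\<close> fin by auto
  qed
  ultimately show ?thesis by (simp add: disjoint_blocks_def)
qed

lemma sort_blocks_canon_partition:
  assumes "disjoint_blocks Ks" "grouping Ks hs" "h \<in> set hs"
  shows "set (sort_blocks h) = set h" "mset (sort_blocks h) = mset h" "sort_blocks h \<noteq> []"
    "sort_blocks h \<in> canon_partitions (covered (sort_blocks h))"
proof -
  have dh: "distinct h" using assms(2,3) by (auto simp: grouping_def distinct_concat_iff)
  have sh: "set h \<subseteq> set Ks" using assms(2,3) by (auto simp: grouping_def)
  have hne: "h \<noteq> []" using assms(2,3) by (auto simp: grouping_def)
  show s: "set (sort_blocks h) = set h" by (simp add: sort_blocks_def)
  show "sort_blocks h \<noteq> []" using s hne by auto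
  show "mset (sort_blocks h) = mset h" by (simp add: sort_blocks_def)
  have fin: "\<forall>X\<in>set h. finite X \<and> X \<noteq> {}" using sh assms(1) by (auto simp: disjoint_blocks_def)
  have fU: "finite (covered (sort_blocks h))" using fin s by auto
  have g: "disjoint_blocks (sort_blocks h)" by (rule disjoint_blocks_subset[OF assms(1)]) (use dh sh s in \<open>auto simp: sort_blocks_def\<close>)
  have "sorted_wrt set_less (sort_blocks h)" unfolding sort_blocks_def by (rule sorted_wrt_set_less_sort_key) (use fin dh in auto)
  then show "sort_blocks h \<in> canon_partitions (covered (sort_blocks h))"
    using g fU by (simp add: canon_partitions_iff disjoint_blocks_def)
qed

lemma normalize_groups_set: "set (map set (normalize_groups hs)) = set (map set hs)"
  by (simp add: normalize_groups_def sort_blocks_def image_image)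

lemma normalize_groups_mset_concat: "mset (concat (normalize_groups hs)) = mset (concat hs)"
proof -
  have "mset (concat (normalize_groups hs)) = mset (concat (map sort_blocks hs))"
    by (rule mset_concat_perm) (simp add: normalize_groups_def)
  also have "\<dots> = mset (concat hs)" by (rule mset_concat_map) (simp add: sort_blocks_def)
  finally show ?thesis .
qed

lemma normalize_groups_comp_index:
  assumes "disjoint_blocks Ks" "grouping Ks hs"
  shows "normalize_groups hs \<in> comp_index Ks"
proof -
  let ?n = "normalize_groups hs"
  have sn: "set ?n = sort_blocks ` set hs" by (simp add: normalize_groups_def)
  have c1: "?n \<noteq> []" using assms(2) sn by (auto simp: grouping_def)
  have c2: "\<forall>\<rho>\<in>set ?n. \<rho> \<noteq> [] \<and> \<rho> \<in> canon_partitions (covered \<rho>)"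
    using sort_blocks_canon_partition[OF assms] sn by auto
  have mc: "mset (concat ?n) = mset (concat hs)" by (rule normalize_groups_mset_concat)
  have c3: "distinct (concat ?n)" using mc assms(2) mset_eq_imp_distinct_iff by (auto simp: grouping_def)
  have c4: "set (concat ?n) = set Ks" using mc assms(2) by (metis mset_eq_setD grouping_def)
  have van: "grouping Ks ?n" using c1 c2 c3 c4 by (simp add: grouping_def)
  have gU: "disjoint_blocks (map covered ?n)" by (rule grouping_disjoint_blocks_covered[OF assms(1) van])
  have dU: "distinct (map covered ?n)" using disjoint_blocks_distinct[OF gU] .
  have "inj_on set_key (set (map covered ?n))" using gU set_key_inj by (auto simp: inj_on_def disjoint_blocks_def)
  then have dk: "distinct (map (\<lambda>h. set_key (covered h)) ?n)" using dU
    by (simp add: distinct_map inj_on_def)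
  have sk: "sorted (map (\<lambda>h. set_key (covered h)) ?n)" by (simp add: normalize_groups_def)
  have "sorted_wrt (\<lambda>g h. set_key (covered g) < set_key (covered h)) ?n"
    using sorted_wrt_key_less_iff[of "\<lambda>h. set_key (covered h)" ?n] dk sk by simp
  then have c5: "sorted_wrt set_less (map covered ?n)" by (simp add: set_less_eq_set_key sorted_wrt_map)
  show ?thesis using c1 c2 c3 c4 c5 by (simp add: comp_index_def)
qed

lemma normalize_groups_id:
  assumes "hs \<in> comp_index Ks"
  shows "normalize_groups hs = hs"
proof -
  have "map sort_blocks hs = hs"
  proof (rule map_idI)
    fix h assume "h \<in> set hs"
    then have "sorted_wrt set_less h" using assms by (auto simp: comp_index_def canon_partitions_def)
    then have "sorted (map set_key h)"
      unfolding set_less_eq_set_key by (simp add: sorted_wrt_key_less_iff)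
    then show "sort_blocks h = h" by (simp add: sort_blocks_def sort_key_id_if_sorted)
  qed
  moreover have "sorted_wrt (\<lambda>g h. set_key (covered g) < set_key (covered h)) hs"
    using assms by (simp add: comp_index_def set_less_eq_set_key sorted_wrt_map)
  then have "sorted (map (\<lambda>h. set_key (covered h)) hs)"
    using sorted_wrt_key_less_iff[of "\<lambda>h. set_key (covered h)" hs] by simp
  ultimately show ?thesis by (simp add: normalize_groups_def sort_key_id_if_sorted)
qed

lemma comp_index_unique:
  assumes "hs \<in> comp_index Ks" "hs' \<in> comp_index Ks" "set (map set hs) = set (map set hs')"
  shows "hs = hs'"
proof -
  have key: "sorted_wrt (\<lambda>g h. set_key (covered g) < set_key (covered h)) L" if "L \<in> comp_index Ks" for L
    using that by (simp add: comp_index_def set_less_eq_set_key sorted_wrt_map)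
  have eq: "g = g'" if "g \<in> set hs" "g' \<in> set hs'" "set g = set g'" for g g'
  proof -
    have "sorted_wrt set_less g" "sorted_wrt set_less g'"
      using that assms(1,2) by (auto simp: comp_index_def canon_partitions_def)
    then show ?thesis using that(3) by (rule set_less_unique)
  qed
  have "set hs = set hs'"
  proof
    show "set hs \<subseteq> set hs'"
    proof
      fix g assume g: "g \<in> set hs"
      have "set g \<in> set (map set hs')" using assms(3) g by (metis image_eqI list.set_map)
      then obtain g' where "g' \<in> set hs'" "set g' = set g" by auto
      then show "g \<in> set hs'" using eq[OF g] by metis
    qed
    show "set hs' \<subseteq> set hs"
    proof
      fix g' assume g': "g' \<in> set hs'"
      have "set g' \<in> set (map set hs)" using assms(3) g' by (metis image_eqI list.set_map)
      then obtain g where "g \<in> set hs" "set g = set g'" by auto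
      then show "g' \<in> set hs" using eq[OF _ g'] by metis
    qed
  qed
  then show ?thesis by (rule sorted_wrt_key_unique[OF key[OF assms(1)] key[OF assms(2)]])
qed

lemma normalize_groups_eq:
  assumes "disjoint_blocks Ks" "grouping Ks hs" "grouping Ks hs'" "set (map set hs) = set (map set hs')"
  shows "normalize_groups hs = normalize_groups hs'"
  using assms(4) normalize_groups_set[of hs] normalize_groups_set[of hs']
  by (intro comp_index_unique[OF normalize_groups_comp_index[OF assms(1,2)]
      normalize_groups_comp_index[OF assms(1,3)]]) simp

lemma comp_index_finite:
  assumes "finite (set Ks)" shows "finite (comp_index Ks)"
proof -
  let ?G = "{g. set g \<subseteq> set Ks \<and> length g \<le> length Ks}"
  have fG: "finite ?G" using finite_lists_length_le[OF assms] by simp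
  have "comp_index Ks \<subseteq> {hs. set hs \<subseteq> ?G \<and> length hs \<le> length Ks}"
  proof
    fix hs assume h: "hs \<in> comp_index Ks"
    have d: "distinct (concat hs)" and s: "set (concat hs) = set Ks" using h by (auto simp: comp_index_def)
    have lc: "length (concat hs) \<le> length Ks"
      using d s by (metis card_length distinct_card)
    have "length hs \<le> length (concat hs)"
    proof -
      have "\<forall>g\<in>set hs. 1 \<le> length g" using h by (auto simp: comp_index_def Suc_le_eq)
      then have "sum_list (map (\<lambda>_. 1::nat) hs) \<le> sum_list (map length hs)"
        by (intro sum_list_mono) auto
      then show ?thesis by (simp add: length_concat sum_list_triv)
    qed
    moreover have "\<forall>g\<in>set hs. set g \<subseteq> set Ks \<and> length g \<le> length Ks"
    proof
      fix g assume "g \<in> set hs"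
      moreover have "length g \<le> length (concat hs)" using \<open>g \<in> set hs\<close>
        by (simp add: length_concat member_le_sum_list)
      ultimately show "set g \<subseteq> set Ks \<and> length g \<le> length Ks" using s lc by auto
    qed
    ultimately have "set hs \<subseteq> ?G" "length hs \<le> length Ks" using lc by auto
    then show "hs \<in> {hs. set hs \<subseteq> ?G \<and> length hs \<le> length Ks}" by simp
  qed
  then show ?thesis by (rule finite_subset) (rule finite_lists_length_le[OF fG])
qed


section \<open>The terms of the expanded composition\<close>

abbreviation group_sizes :: "nat set list list \<Rightarrow> nat list" where
  "group_sizes hs \<equiv> map (\<lambda>h. card (covered h)) hs"

definition card_sorted :: "nat set list list \<Rightarrow> bool" where
  "card_sorted hs \<longleftrightarrow> (\<forall>h\<in>set hs. sorted (map card h)) \<and> sorted (group_sizes hs)"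

lemma concat_update:
  "j < length hs \<Longrightarrow> concat (hs[j := g]) = concat (take j hs) @ g @ concat (drop (Suc j) hs)"
  by (simp add: upd_conv_take_nth_drop)

lemma concat_nth:
  "j < length hs \<Longrightarrow> concat hs = concat (take j hs) @ hs ! j @ concat (drop (Suc j) hs)"
  by (metis concat.simps(2) concat_append id_take_nth_drop)

lemma psgn_concat_swap_adj:
  assumes "disjoint_blocks (concat hs)" "Suc j < length hs"
  shows "psgn (concat (swap_adj j hs))
           = (-1) ^ (card (covered (hs ! j)) * card (covered (hs ! Suc j))) * psgn (concat hs)"
proof -
  obtain P g h S where d: "hs = P @ g # h # S" "length P = j"
    using split_at_adjacent[OF assms(2)] .
  moreover have "swap_adj j hs = P @ h # g # S" using d swap_adj_append by metis
  ultimately have "concat (swap_adj j hs) = concat P @ h @ g @ concat S"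
    "concat hs = concat P @ g @ h @ concat S" "hs ! j = g" "hs ! Suc j = h"
    by (auto simp: nth_append)
  moreover have "distinct (flat_blocks g @ flat_blocks h)" "\<forall>X\<in>set g. finite X" "\<forall>X\<in>set h. finite X"
    using assms(1) d by (auto simp: disjoint_blocks_def)
  ultimately show ?thesis using psgn_swap_segments[of g h "concat P" "concat S"] by simp
qed

lemma psgn_concat_inner_swap:
  assumes "disjoint_blocks (concat hs)" "j < length hs" "Suc i < length (hs ! j)"
  shows "psgn (concat (hs[j := swap_adj i (hs ! j)]))
           = (-1) ^ (card (hs ! j ! i) * card (hs ! j ! Suc i)) * psgn (concat hs)"
proof -
  obtain us x y vs where g: "hs ! j = us @ x # y # vs" "length us = i"
    using split_at_adjacent[OF assms(3)] .
  let ?P = "concat (take j hs) @ us"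
  have c: "concat hs = ?P @ x # y # vs @ concat (drop (Suc j) hs)"
    using concat_nth[OF assms(2)] g by simp
  have "swap_adj i (hs ! j) = us @ y # x # vs" using g swap_adj_append by metis
  then have "concat (hs[j := swap_adj i (hs ! j)]) = ?P @ y # x # vs @ concat (drop (Suc j) hs)"
    using concat_update[OF assms(2)] by simp
  also have "\<dots> = swap_adj (length ?P) (concat hs)"
    unfolding c by (rule swap_adj_append[symmetric])
  finally have "concat (hs[j := swap_adj i (hs ! j)]) = swap_adj (length ?P) (concat hs)" .
  moreover have "concat hs ! length ?P = hs ! j ! i" "concat hs ! Suc (length ?P) = hs ! j ! Suc i"
    "Suc (length ?P) < length (concat hs)"
    using c g by (auto simp: nth_append)
  ultimately show ?thesis
    using psgn_swap_adj[of "length ?P" "concat hs"] assms(1) by (simp add: disjoint_blocks_def)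
qed

lemma parity_sign_cancel:
  fixes x :: "'a::real_vector"
  shows "((-1) ^ (c * c) * r) *\<^sub>R (if even c then 1 else -1) *\<^sub>R x = r *\<^sub>R x"
proof -
  have "(if even c then 1 else -1 :: real) * (-1) ^ (c * c) = 1"
    by (auto simp: power_mult)
  then have factor: "((-1) ^ (c * c) * r) * (if even c then 1 else -1 :: real) = r"
    by (simp only: mult_ac mult_1_left)
  show ?thesis unfolding scaleR_scaleR factor ..
qed

locale composition_setting =
  fixes n :: nat
    and A :: "nat \<Rightarrow> 'm \<Rightarrow> 'a::real_vector set"
    and B :: "nat \<Rightarrow> 'n \<Rightarrow> 'b::real_vector set"
    and C :: "nat \<Rightarrow> 'p \<Rightarrow> 'c::real_vector set"
    and eta0 :: "'m \<Rightarrow> 'n" and tau0 :: "'n \<Rightarrow> 'p"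
    and eta :: "nat list \<Rightarrow> 'a list \<Rightarrow> 'b"
    and tau :: "nat list \<Rightarrow> 'b list \<Rightarrow> 'c"
    and J :: "nat set" and m :: 'm and a :: "nat set \<Rightarrow> 'a"
  assumes family_A: "vb_family n A" and family_B: "vb_family n B"
    and morphism_eta: "sym_morphism n A B eta0 eta"
    and morphism_tau: "sym_morphism n B C tau0 tau"
    and J_subset: "J \<subseteq> {1..n}" and a_in_E: "in_E A J m a"
begin

definition eta_block :: "nat set list \<Rightarrow> 'b" where
  "eta_block h = eta (map card h) (map a h)"

text \<open>For a tuple \<open>hs = (\<rho>\<^sub>1, \<dots>, \<rho>\<^sub>l)\<close> of partitions, \<open>comp_term hs\<close> is the summand
  \<open>sgn(\<rho>\<^sub>1, \<dots>, \<rho>\<^sub>l) \<tau>(\<eta>(\<rho>\<^sub>1), \<dots>, \<eta>(\<rho>\<^sub>l))\<close> of the formula, with the blocks \<open>K\<close> themselves as labels.\<close>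

definition comp_term :: "nat set list list \<Rightarrow> 'c" where
  "comp_term hs = psgn (concat hs) *\<^sub>R tau (group_sizes hs) (map eta_block hs)"

definition admissible :: "nat set list list \<Rightarrow> bool" where
  "admissible hs \<longleftrightarrow> disjoint_blocks (concat hs) \<and> (\<forall>h\<in>set hs. h \<noteq> []) \<and> (\<forall>X\<in>set (concat hs). X \<subseteq> J)"

lemma finite_J: "finite J"
  using J_subset by (rule finite_subset) simp

lemma card_J_le: "card J \<le> n"
  using card_mono[OF _ J_subset] by simp

lemma a_in_fibre: "X \<noteq> {} \<Longrightarrow> X \<subseteq> J \<Longrightarrow> a X \<in> A (card X) m"
  using a_in_E by (simp add: in_E_def)

lemma admissible_group:
  assumes "admissible hs" "h \<in> set hs"
  shows "disjoint_blocks h" "h \<noteq> []" "\<forall>X\<in>set h. X \<subseteq> J"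
proof -
  have "distinct (concat hs)" using disjoint_blocks_distinct assms(1) by (simp add: admissible_def)
  with assms show "disjoint_blocks h"
    by (intro disjoint_blocks_subset[of "concat hs" h]) (auto simp: admissible_def distinct_concat_iff)
  show "h \<noteq> []" "\<forall>X\<in>set h. X \<subseteq> J" using assms by (auto simp: admissible_def)
qed

lemma sum_group_sizes_le:
  assumes "admissible hs" shows "sum_list (group_sizes hs) \<le> n"
proof -
  have "sum_list (group_sizes hs) = sum_list (map (\<lambda>h. sum_list (map card h)) hs)"
    by (rule arg_cong[where f=sum_list], rule map_cong[OF refl])
       (use admissible_group(1)[OF assms] disjoint_blocks_card_covered in auto)
  also have "\<dots> = card (covered (concat hs))"
  proof -
    have "sum_list (map card (concat hs)) = sum_list (map (\<lambda>h. sum_list (map card h)) hs)"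
      by (induction hs) auto
    then show ?thesis using disjoint_blocks_card_covered[of "concat hs"] assms
      by (simp add: admissible_def)
  qed
  also have "\<dots> \<le> card J" using assms finite_J by (intro card_mono) (auto simp: admissible_def)
  finally show ?thesis using card_J_le by simp
qed

lemma eta_block_valid:
  assumes "admissible hs" "h \<in> set hs" "sorted (map card h)"
  shows "valid_tuple n (map card h)" "in_fibres A (map card h) (map a h) m"
    "eta_block h \<in> B (card (covered h)) (eta0 m)"
proof -
  have g: "disjoint_blocks h" "h \<noteq> []" "\<forall>X\<in>set h. X \<subseteq> J" using admissible_group[OF assms(1,2)] by auto
  have "sum_list (map card h) = card (covered h)" using disjoint_blocks_card_covered[OF g(1)] by simp
  also have "\<dots> \<le> card J" using g(3) finite_J by (intro card_mono) auto
  finally have "sum_list (map card h) \<le> n" using card_J_le by simp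
  moreover have "\<forall>i\<in>set (map card h). 1 \<le> i" using g(1)
    by (auto simp: disjoint_blocks_def Suc_le_eq card_gt_0_iff)
  ultimately show valid: "valid_tuple n (map card h)" using g(2) assms(3) by (simp add: valid_tuple_def)
  show fibres: "in_fibres A (map card h) (map a h) m"
    using g by (auto simp: in_fibres_def disjoint_blocks_def intro!: a_in_fibre)
  have "eta_block h \<in> B (sum_list (map card h)) (eta0 m)"
    unfolding eta_block_def by (rule component_fibre[OF morphism_eta family_A valid fibres])
  then show "eta_block h \<in> B (card (covered h)) (eta0 m)"
    using disjoint_blocks_card_covered[OF g(1)] by simp
qed

lemma tau_args_valid:
  assumes "admissible hs" "card_sorted hs" "hs \<noteq> []"
  shows "valid_tuple n (group_sizes hs)" "in_fibres B (group_sizes hs) (map eta_block hs) (eta0 m)"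
proof -
  have "1 \<le> card (covered h)" if h: "h \<in> set hs" for h
  proof -
    have g: "disjoint_blocks h" "h \<noteq> []" using admissible_group[OF assms(1) h] by auto
    then obtain X where "X \<in> set h" using last_in_set by blast
    then show ?thesis using g by (auto simp: disjoint_blocks_def Suc_le_eq card_gt_0_iff)
  qed
  then show "valid_tuple n (group_sizes hs)"
    using assms sum_group_sizes_le[OF assms(1)] by (auto simp: valid_tuple_def card_sorted_def)
  show "in_fibres B (group_sizes hs) (map eta_block hs) (eta0 m)"
    using eta_block_valid(3)[OF assms(1)] assms(2) by (auto simp: in_fibres_def card_sorted_def)
qed

lemma eta_block_swap:
  assumes "admissible hs" "h \<in> set hs" "sorted (map card h)" "Suc i < length h"
    "card (h ! i) = card (h ! Suc i)"
  shows "eta_block (swap_adj i h) = (if even (card (h ! i)) then 1 else -1) *\<^sub>R eta_block h"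
proof -
  have "swap_adj i (map card h) = map card h"
    by (rule swap_adj_same) (use assms(4,5) in simp_all)
  then have "eta_block (swap_adj i h) = eta (map card h) (swap_adj i (map a h))"
    unfolding eta_block_def by (simp add: map_swap_adj[OF assms(4)])
  also have "\<dots> = (if even (map card h ! i) then 1 else -1) *\<^sub>R eta (map card h) (map a h)"
    by (rule component_swap[OF morphism_eta family_A eta_block_valid(1,2)[OF assms(1-3)]])
       (use assms(4,5) in auto)
  finally show ?thesis using assms(4) by (simp add: eta_block_def)
qed

lemma comp_term_inner_swap:
  assumes "admissible hs" "card_sorted hs" "j < length hs" "Suc i < length (hs ! j)"
    "card (hs ! j ! i) = card (hs ! j ! Suc i)"
  shows "comp_term (hs[j := swap_adj i (hs ! j)]) = comp_term hs"
proof -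
  let ?g = "hs ! j" and ?c = "card (hs ! j ! i)"
  let ?s = "if even ?c then 1 else -1 :: real"
  have hj: "?g \<in> set hs" and sj: "sorted (map card ?g)"
    using assms(2,3) by (auto simp: card_sorted_def)
  have sign: "psgn (concat (hs[j := swap_adj i ?g])) = (-1) ^ (?c * ?c) * psgn (concat hs)"
    using psgn_concat_inner_swap[OF _ assms(3,4)] assms(1,5) by (simp add: admissible_def)
  have sizes: "group_sizes (hs[j := swap_adj i ?g]) = group_sizes hs"
  proof -
    have "card (covered (swap_adj i ?g)) = group_sizes hs ! j" using set_swap_adj[OF assms(4)] assms(3) by simp
    then show ?thesis by (simp only: map_update list_update_id)
  qed
  have args: "map eta_block (hs[j := swap_adj i ?g]) = (map eta_block hs)[j := ?s *\<^sub>R eta_block ?g]"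
    using eta_block_swap[OF assms(1) hj sj assms(4,5)] by (simp add: map_update)
  have "hs \<noteq> []" using assms(3) by auto
  note valid = tau_args_valid[OF assms(1,2) this]
  have "tau (group_sizes hs) ((map eta_block hs)[j := ?s *\<^sub>R eta_block ?g])
      = ?s *\<^sub>R tau (group_sizes hs) ((map eta_block hs)[j := eta_block ?g])"
    by (rule component_scale[OF morphism_tau family_B valid])
       (use assms(3) eta_block_valid(3)[OF assms(1) hj sj] in auto)
  also have "(map eta_block hs)[j := eta_block ?g] = map eta_block hs"
    by (simp add: map_update[symmetric])
  finally have "tau (group_sizes hs) ((map eta_block hs)[j := ?s *\<^sub>R eta_block ?g])
      = ?s *\<^sub>R tau (group_sizes hs) (map eta_block hs)" .
  then show ?thesis
    unfolding comp_term_def sign sizes args by (simp only: parity_sign_cancel)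
qed

lemma comp_term_outer_swap:
  assumes "admissible hs" "card_sorted hs" "Suc j < length hs"
    "card (covered (hs ! j)) = card (covered (hs ! Suc j))"
  shows "comp_term (swap_adj j hs) = comp_term hs"
proof -
  let ?c = "card (covered (hs ! j))"
  have sign: "psgn (concat (swap_adj j hs)) = (-1) ^ (?c * ?c) * psgn (concat hs)"
    using psgn_concat_swap_adj[OF _ assms(3)] assms(1,4) by (simp add: admissible_def)
  have sizes: "group_sizes (swap_adj j hs) = group_sizes hs"
    unfolding map_swap_adj[OF assms(3)] by (rule swap_adj_same) (use assms(3,4) in simp_all)
  have "hs \<noteq> []" using assms(3) by auto
  note valid = tau_args_valid[OF assms(1,2) this]
  have "tau (group_sizes hs) (swap_adj j (map eta_block hs))
      = (if even (group_sizes hs ! j) then 1 else -1) *\<^sub>R tau (group_sizes hs) (map eta_block hs)"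
    by (rule component_swap[OF morphism_tau family_B valid]) (use assms(3,4) in auto)
  then show ?thesis
    unfolding comp_term_def sign sizes map_swap_adj[OF assms(3)] nth_map[OF Suc_lessD[OF assms(3)]]
    by (simp only: parity_sign_cancel)
qed

lemma admissible_update:
  assumes "admissible hs" "j < length hs" "mset g = mset (hs ! j)"
  shows "admissible (hs[j := g])"
proof -
  have m: "mset (concat (hs[j := g])) = mset (concat hs)"
    using concat_update[OF assms(2)] concat_nth[OF assms(2)] assms(3) by simp
  have "hs ! j \<noteq> []" using assms(1,2) by (auto simp: admissible_def)
  then have "g \<noteq> []" using assms(3) by auto
  then have "\<forall>h\<in>set (hs[j := g]). h \<noteq> []" using assms(1)
    by (auto simp: admissible_def dest: set_update_subset_insert[THEN subsetD])
  moreover have "set (concat (hs[j := g])) = set (concat hs)" using m by (metis set_mset_mset)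
  ultimately show ?thesis using assms(1) disjoint_blocks_perm[of "concat hs" "concat (hs[j := g])"] m
    by (simp add: admissible_def)
qed

lemma card_sorted_update:
  assumes "card_sorted hs" "j < length hs" "set g = set (hs ! j)" "sorted (map card g)"
  shows "card_sorted (hs[j := g])"
proof -
  have "group_sizes (hs[j := g]) = group_sizes hs"
  proof -
    have "card (covered g) = group_sizes hs ! j" using assms(2,3) by simp
    then show ?thesis by (simp only: map_update list_update_id)
  qed
  then show ?thesis using assms(1,4) by (auto simp: card_sorted_def dest: set_update_subset_insert[THEN subsetD])
qed

lemma comp_term_reorder_group:
  assumes "admissible hs" "card_sorted hs" "j < length hs" "mset g = mset (hs ! j)" "sorted (map card g)"
  shows "comp_term (hs[j := g]) = comp_term hs"
proof -
  have "(\<lambda>g. comp_term (hs[j := g])) g = (\<lambda>g. comp_term (hs[j := g])) (hs ! j)"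
  proof (rule sorted_perm_invariant[where key = card])
    fix zs i assume z: "mset zs = mset (hs ! j)" "sorted (map card zs)" "Suc i < length zs"
      "card (zs ! i) = card (zs ! Suc i)"
    let ?hz = "hs[j := zs]"
    have "admissible ?hz" by (rule admissible_update[OF assms(1,3) z(1)])
    moreover have "card_sorted ?hz"
      by (rule card_sorted_update[OF assms(2,3) _ z(2)]) (metis z(1) set_mset_mset)
    ultimately have "comp_term (?hz[j := swap_adj i (?hz ! j)]) = comp_term ?hz"
      by (rule comp_term_inner_swap) (use assms(3) z in auto)
    then show "comp_term (hs[j := swap_adj i zs]) = comp_term (hs[j := zs])" using assms(3) by simp
  next
    show "sorted (map card (hs ! j))" using assms(2,3) by (simp add: card_sorted_def)
  qed (fact assms(4,5))+
  then show ?thesis by simp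
qed

lemma comp_term_sort_blocks:
  assumes "admissible hs" "card_sorted hs"
  shows "admissible (map sort_blocks hs) \<and> card_sorted (map sort_blocks hs)
    \<and> comp_term (map sort_blocks hs) = comp_term hs"
proof -
  have "admissible (map sort_blocks (take k hs) @ drop k hs) \<and> card_sorted (map sort_blocks (take k hs) @ drop k hs)
      \<and> comp_term (map sort_blocks (take k hs) @ drop k hs) = comp_term hs" if "k \<le> length hs" for k
    using that
  proof (induction k)
    case 0 then show ?case using assms by simp
  next
    case (Suc k)
    let ?h = "map sort_blocks (take k hs) @ drop k hs"
    have k: "k < length ?h" using Suc.prems by simp
    have IH: "admissible ?h" "card_sorted ?h" "comp_term ?h = comp_term hs" using Suc by auto
    have hk: "?h ! k = hs ! k" using k by (simp add: nth_append)
    have eq: "map sort_blocks (take (Suc k) hs) @ drop (Suc k) hs = ?h[k := sort_blocks (hs ! k)]"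
      using k by (simp add: take_Suc_conv_app_nth list_update_append Cons_nth_drop_Suc[symmetric])
    have ms: "mset (sort_blocks (hs ! k)) = mset (?h ! k)" using hk by (simp add: sort_blocks_def)
    have "admissible (?h[k := sort_blocks (hs ! k)])" by (rule admissible_update[OF IH(1) k ms])
    moreover have "card_sorted (?h[k := sort_blocks (hs ! k)])"
      by (rule card_sorted_update[OF IH(2) k _ sort_blocks_sorted_card]) (simp only: hk, simp add: sort_blocks_def)
    moreover have "comp_term (?h[k := sort_blocks (hs ! k)]) = comp_term ?h"
      by (rule comp_term_reorder_group[OF IH(1,2) k ms sort_blocks_sorted_card])
    ultimately show ?case using eq IH(3) by simp
  qed
  from this[of "length hs"] show ?thesis by simp
qed

lemma comp_term_reorder_groups:
  assumes "admissible hs" "card_sorted hs" "mset hs' = mset hs" "sorted (group_sizes hs')"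
  shows "comp_term hs' = comp_term hs"
proof (rule sorted_perm_invariant[where key = "\<lambda>h. card (covered h)"])
  fix zs j assume z: "mset zs = mset hs" "sorted (group_sizes zs)" "Suc j < length zs"
    "card (covered (zs ! j)) = card (covered (zs ! Suc j))"
  have "set zs = set hs" using z(1) by (metis set_mset_mset)
  moreover have "mset (concat zs) = mset (concat hs)" by (rule mset_concat_perm[OF z(1)])
  ultimately have "admissible zs" "card_sorted zs"
    using assms(1,2) z(2) disjoint_blocks_perm[of "concat hs" "concat zs"]
    by (auto simp: admissible_def card_sorted_def dest: mset_eq_setD)
  then show "comp_term (swap_adj j zs) = comp_term zs" by (rule comp_term_outer_swap[OF _ _ z(3,4)])
next
  show "sorted (group_sizes hs)" using assms(2) by (simp add: card_sorted_def)
qed (fact assms(3,4))+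

lemma comp_term_normalize:
  assumes "admissible hs" "card_sorted hs"
  shows "comp_term (normalize_groups hs) = comp_term hs"
proof -
  have s: "admissible (map sort_blocks hs)" "card_sorted (map sort_blocks hs)"
    "comp_term (map sort_blocks hs) = comp_term hs"
    using comp_term_sort_blocks[OF assms] by auto
  have "sorted (group_sizes (normalize_groups hs))"
    by (rule sorted_set_key_covered_card) (simp add: normalize_groups_def)
  then have "comp_term (normalize_groups hs) = comp_term (map sort_blocks hs)"
    by (intro comp_term_reorder_groups[OF s(1,2)]) (simp_all add: normalize_groups_def)
  then show ?thesis using s(3) by simp
qed

end

section \<open>Relabelling the formula from consecutive blocks\<close>

fun consecutive_blocks :: "nat \<Rightarrow> nat list \<Rightarrow> nat set list" where
  "consecutive_blocks s [] = []"
| "consecutive_blocks s (x # p) = {s + 1 .. s + x} # consecutive_blocks (s + x) p"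

lemma consecutive_blocks_eq:
  "map (\<lambda>j. {s + sum_list (take j p) + 1 .. s + sum_list (take (Suc j) p)}) [0..<length p]
     = consecutive_blocks s p"
proof (induction p arbitrary: s)
  case Nil then show ?case by simp
next
  case (Cons x p)
  have "[0..<length (x # p)] = 0 # map Suc [0..<length p]"
    by (simp only: length_Cons upt_conv_Cons[OF zero_less_Suc] map_Suc_upt)
  then have "map (\<lambda>j. {s + sum_list (take j (x # p)) + 1 .. s + sum_list (take (Suc j) (x # p))}) [0..<length (x # p)]
     = {s + 1 .. s + x} # map (\<lambda>j. {(s + x) + sum_list (take j p) + 1 .. (s + x) + sum_list (take (Suc j) p)}) [0..<length p]"
    by (simp add: add.assoc)
  then show ?case using Cons.IH[of "s + x"] by simp
qed

lemma rho_can_consecutive_blocks: "rho_can p = consecutive_blocks 0 p"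
  using consecutive_blocks_eq[of 0 p] by (simp add: rho_can_def)

lemma length_consecutive_blocks [simp]: "length (consecutive_blocks s p) = length p"
  by (induction p arbitrary: s) auto

lemma card_consecutive_blocks: "i < length p \<Longrightarrow> card (consecutive_blocks s p ! i) = p ! i"
  by (induction p arbitrary: s i) (auto simp: nth_Cons split: nat.splits)

lemma flat_blocks_consecutive_blocks:
  "flat_blocks (consecutive_blocks s p) = [s + 1 ..< s + sum_list p + 1]"
proof (induction p arbitrary: s)
  case Nil then show ?case by simp
next
  case (Cons x p)
  have "sorted_list_of_set {s + 1 .. s + x} = [s + 1 ..< s + x + 1]"
    by (metis Suc_eq_plus1 atLeastLessThanSuc_atLeastAtMost sorted_list_of_set_range)
  moreover have "[s + 1 ..< (s + x + 1) + sum_list p] = [s + 1 ..< s + x + 1] @ [s + x + 1 ..< (s + x + 1) + sum_list p]"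
    by (rule upt_add_eq_append) simp
  moreover have "(s + x + 1) + sum_list p = s + x + sum_list p + 1" "s + sum_list (x # p) + 1 = s + x + sum_list p + 1"
    by simp_all
  ultimately show ?case using Cons.IH[of "s + x"] by (simp only: flat_blocks_simps consecutive_blocks.simps)
qed

lemma consecutive_blocks_nonempty: "\<forall>i\<in>set p. 1 \<le> i \<Longrightarrow> X \<in> set (consecutive_blocks s p) \<Longrightarrow> X \<noteq> {}"
  by (induction p arbitrary: s) auto

lemma consecutive_blocks_finite: "X \<in> set (consecutive_blocks s p) \<Longrightarrow> finite X"
  by (induction p arbitrary: s) auto

lemma consecutive_blocks_disjoint_blocks:
  "\<forall>i\<in>set p. 1 \<le> i \<Longrightarrow> disjoint_blocks (consecutive_blocks s p)"
  unfolding disjoint_blocks_def flat_blocks_consecutive_blocks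
  using consecutive_blocks_nonempty consecutive_blocks_finite by auto

lemma psgn_consecutive_blocks: "psgn (consecutive_blocks s p) = 1"
  by (simp only: psgn_flat_blocks flat_blocks_consecutive_blocks inversions_sorted[OF sorted_upt]) simp

definition relabel :: "nat set list \<Rightarrow> nat set list \<Rightarrow> nat set \<Rightarrow> nat set" where
  "relabel Ks Ks' X = the (map_of (zip Ks Ks') X)"

locale block_bijection =
  fixes Ks Ks' :: "nat set list"
  assumes blocks: "disjoint_blocks Ks" and blocks': "disjoint_blocks Ks'"
    and same_length: "length Ks = length Ks'"
    and same_cards: "\<And>i. i < length Ks \<Longrightarrow> card (Ks ! i) = card (Ks' ! i)"
begin

abbreviation "\<phi> \<equiv> relabel Ks Ks'"
abbreviation "\<psi> \<equiv> relabel Ks' Ks"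

lemma distinct_Ks: "distinct Ks"
  using disjoint_blocks_distinct[OF blocks] .

lemma relabel_nth: "i < length Ks \<Longrightarrow> \<phi> (Ks ! i) = Ks' ! i"
  unfolding relabel_def using map_of_zip_nth[OF same_length distinct_Ks] same_length by simp

lemma relabel_back_nth: "i < length Ks \<Longrightarrow> \<psi> (Ks' ! i) = Ks ! i"
  unfolding relabel_def
  using map_of_zip_nth[OF same_length[symmetric] disjoint_blocks_distinct[OF blocks']] same_length
  by simp

lemma map_relabel: "map \<phi> Ks = Ks'"
  by (rule nth_equalityI) (auto simp: same_length relabel_nth)

lemma relabel_inverse: "X \<in> set Ks \<Longrightarrow> \<psi> (\<phi> X) = X"
  by (metis in_set_conv_nth relabel_nth relabel_back_nth)

lemma relabel_in_set: "X \<in> set Ks \<Longrightarrow> \<phi> X \<in> set Ks'"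
  by (metis in_set_conv_nth same_length nth_mem relabel_nth)

lemma card_relabel: "X \<in> set Ks \<Longrightarrow> card (\<phi> X) = card X"
  by (metis same_cards in_set_conv_nth relabel_nth)

lemma inj_on_relabel: "inj_on \<phi> (set Ks)"
  by (metis inj_onI relabel_inverse)

lemma relabel_image: "\<phi> ` set Ks = set Ks'"
  by (metis map_relabel set_map)

lemma map_card_relabel: "set \<rho> \<subseteq> set Ks \<Longrightarrow> map card (map \<phi> \<rho>) = map card \<rho>"
  using card_relabel by (induction \<rho>) auto

lemma grouping_relabel:
  assumes "grouping Ks L" shows "grouping Ks' (map (map \<phi>) L)"
proof -
  have L: "set (concat L) = set Ks" using assms by (simp add: grouping_def)
  then have "distinct (map \<phi> (concat L))"
    using assms inj_on_relabel by (simp add: grouping_def distinct_map)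
  moreover have "set (map \<phi> (concat L)) = set Ks'" using L relabel_image by simp
  moreover have "concat (map (map \<phi>) L) = map \<phi> (concat L)" by (simp add: map_concat)
  ultimately show ?thesis using assms by (auto simp: grouping_def)
qed

lemma set_map_set_relabel: "set (map set (map (map \<phi>) L)) = (\<lambda>S. \<phi> ` S) ` set (map set L)"
  by (auto simp: image_image)

lemma disjoint_blocks_relabel_group:
  assumes "grouping Ks L" "\<rho> \<in> set L"
  shows "disjoint_blocks (map \<phi> \<rho>)"
proof (rule disjoint_blocks_subset[OF blocks'])
  have s: "set \<rho> \<subseteq> set Ks" using assms by (auto simp: grouping_def)
  show "distinct (map \<phi> \<rho>)"
    using disjoint_blocks_distinct[OF grouping_group_disjoint_blocks[OF blocks assms]] inj_on_relabel s
    by (simp add: distinct_map inj_on_subset)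
  show "set (map \<phi> \<rho>) \<subseteq> set Ks'" using s relabel_in_set by auto
qed

lemma card_covered_relabel:
  assumes "grouping Ks L" "\<rho> \<in> set L"
  shows "card (covered (map \<phi> \<rho>)) = card (covered \<rho>)"
proof -
  have "set \<rho> \<subseteq> set Ks" using assms by (auto simp: grouping_def)
  then show ?thesis
    using disjoint_blocks_card_covered[OF disjoint_blocks_relabel_group[OF assms]]
      disjoint_blocks_card_covered[OF grouping_group_disjoint_blocks[OF blocks assms]]
    by (simp only: map_card_relabel)
qed

text \<open>Relabelling preserves sizes, so an adjacent transposition changes the sign of \<open>L\<close> and of its
  relabelling by the same factor.\<close>

lemma psgn_relabel:
  assumes "mset L = mset Ks"
  shows "psgn L * psgn (map \<phi> L) = psgn Ks * psgn Ks'"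
proof -
  have "(\<lambda>L. psgn L * psgn (map \<phi> L)) L = (\<lambda>L. psgn L * psgn (map \<phi> L)) Ks"
  proof (rule sorted_perm_invariant[where key = "\<lambda>_. 0::nat"])
    fix zs j assume z: "mset zs = mset Ks" "Suc j < length zs"
    have "disjoint_blocks zs" by (rule disjoint_blocks_perm[OF blocks z(1)[symmetric]])
    moreover have "disjoint_blocks (map \<phi> zs)"
      using z(1) map_relabel disjoint_blocks_perm[OF blocks'] by (metis mset_map)
    moreover have "set zs = set Ks" using z(1) by (metis set_mset_mset)
    then have "card (\<phi> (zs ! j)) = card (zs ! j)" "card (\<phi> (zs ! Suc j)) = card (zs ! Suc j)"
      using card_relabel z(2) nth_mem[of j zs] nth_mem[of "Suc j" zs] by auto
    ultimately have p1: "psgn (swap_adj j zs) = (-1) ^ (card (zs ! j) * card (zs ! Suc j)) * psgn zs"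
      and p2: "psgn (swap_adj j (map \<phi> zs)) = (-1) ^ (card (zs ! j) * card (zs ! Suc j)) * psgn (map \<phi> zs)"
      using psgn_swap_adj[of j zs] psgn_swap_adj[of j "map \<phi> zs"] z(2) by (auto simp: disjoint_blocks_def)
    have "((-1::real) ^ (card (zs ! j) * card (zs ! Suc j))) * (-1) ^ (card (zs ! j) * card (zs ! Suc j)) = 1"
      by (simp add: power_mult_distrib[symmetric])
    then show "psgn (swap_adj j zs) * psgn (map \<phi> (swap_adj j zs)) = psgn zs * psgn (map \<phi> zs)"
      unfolding map_swap_adj[OF z(2)] p1 p2 by (simp add: algebra_simps)
  qed (use assms in \<open>simp_all add: map_replicate_const\<close>)
  then show ?thesis using map_relabel by simp
qed

lemma lookup_relabel:
  assumes "X \<in> set Ks"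
  shows "the (map_of (zip Ks (map f Ks')) X) = f (\<phi> X)"
proof -
  obtain i where i: "i < length Ks" "X = Ks ! i" using assms by (metis in_set_conv_nth)
  then have "map_of (zip Ks (map f Ks')) (Ks ! i) = Some (map f Ks' ! i)"
    using same_length by (intro map_of_zip_nth[OF _ distinct_Ks]) auto
  then show ?thesis using i same_length by (simp add: relabel_nth)
qed

lemma normalize_groups_relabel:
  "gs \<in> comp_index Ks \<Longrightarrow> normalize_groups (map (map \<phi>) gs) \<in> comp_index Ks'"
  by (rule normalize_groups_comp_index[OF blocks' grouping_relabel[OF comp_index_grouping]])

lemma normalize_groups_relabel_inverse:
  assumes gs: "gs \<in> comp_index Ks"
  shows "normalize_groups (map (map \<psi>) (normalize_groups (map (map \<phi>) gs))) = gs"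
proof -
  interpret inverse: block_bijection Ks' Ks
    using blocks blocks' same_length same_cards by unfold_locales auto
  let ?gs' = "normalize_groups (map (map \<phi>) gs)"
  have v: "grouping Ks gs" by (rule comp_index_grouping[OF gs])
  have v': "grouping Ks (map (map \<psi>) ?gs')"
    by (rule inverse.grouping_relabel[OF comp_index_grouping[OF normalize_groups_relabel[OF gs]]])
  have "\<psi> ` \<phi> ` S = S" if "S \<in> set (map set gs)" for S
  proof -
    have "S \<subseteq> set Ks" using that v by (auto simp: grouping_def)
    then have "\<psi> ` \<phi> ` S = (\<lambda>x. x) ` S" unfolding image_image
      by (intro image_cong[OF refl]) (auto simp: relabel_inverse)
    then show ?thesis by simp
  qed
  moreover have "set (map set (map (map \<psi>) ?gs')) = (\<lambda>S. \<psi> ` S) ` (\<lambda>S. \<phi> ` S) ` set (map set gs)"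
    unfolding inverse.set_map_set_relabel normalize_groups_set set_map_set_relabel ..
  ultimately have "set (map set (map (map \<psi>) ?gs')) = set (map set gs)"
    by (simp add: image_image cong: image_cong)
  then show ?thesis
    using normalize_groups_eq[OF blocks v' v] normalize_groups_id[OF gs] by simp
qed

end

lemma block_bijection_rho_can:
  assumes "finite I" "\<pi> \<in> canon_partitions I"
  shows "block_bijection (rho_can (map card \<pi>)) \<pi>"
proof
  have blocks: "disjoint_blocks \<pi>" by (rule canon_partitions_disjoint_blocks[OF assms])
  then show "disjoint_blocks \<pi>" .
  have "\<forall>i\<in>set (map card \<pi>). 1 \<le> i"
    using blocks by (auto simp: disjoint_blocks_def Suc_le_eq card_gt_0_iff)
  then show "disjoint_blocks (rho_can (map card \<pi>))"
    unfolding rho_can_consecutive_blocks by (rule consecutive_blocks_disjoint_blocks)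
  show "length (rho_can (map card \<pi>)) = length \<pi>"
    unfolding rho_can_consecutive_blocks by simp
  show "card (rho_can (map card \<pi>) ! i) = card (\<pi> ! i)" if "i < length (rho_can (map card \<pi>))" for i
    using that card_consecutive_blocks[of i "map card \<pi>" 0] unfolding rho_can_consecutive_blocks by simp
qed

section \<open>Two-level partitions\<close>

lemma listset_iff: "xs \<in> listset As \<longleftrightarrow> length xs = length As \<and> (\<forall>i<length xs. xs ! i \<in> As ! i)"
proof (induction As arbitrary: xs)
  case Nil then show ?case by auto
next
  case (Cons A As)
  note IH = Cons.IH
  show ?case
  proof (cases xs)
    case Nil then show ?thesis by (auto simp: set_Cons_def)
  next
    case (Cons y ys)
    have "xs \<in> listset (A # As) \<longleftrightarrow> y \<in> A \<and> ys \<in> listset As" using Cons by (auto simp: set_Cons_def)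
    also have "\<dots> \<longleftrightarrow> length xs = length (A # As) \<and> (\<forall>i<length xs. xs ! i \<in> (A # As) ! i)"
      using Cons IH[of ys] by (auto simp: nth_Cons split: nat.splits)
    finally show ?thesis .
  qed
qed

lemma listset_finite: "\<forall>A\<in>set As. finite A \<Longrightarrow> finite (listset As)"
proof (induction As)
  case Nil then show ?case by simp
next
  case (Cons A As)
  have "set_Cons A (listset As) = (\<lambda>z. fst z # snd z) ` (A \<times> listset As)"
    by (auto simp: set_Cons_def image_iff)
  then show ?case using Cons by simp
qed

lemma map_covered_listset:
  assumes "\<sigma>s \<in> listset (map canon_partitions \<rho>)"
  shows "map covered \<sigma>s = \<rho>"
proof -
  have "length \<sigma>s = length \<rho>" "\<forall>i<length \<sigma>s. \<sigma>s ! i \<in> canon_partitions (\<rho> ! i)"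
    using assms by (auto simp: listset_iff)
  then show ?thesis by (intro nth_equalityI) (auto simp: covered_canon_partitions)
qed

lemma listset_canon_partitions_groups:
  assumes "finite I" "\<rho> \<in> canon_partitions I" "\<sigma>s \<in> listset (map canon_partitions \<rho>)" "\<sigma> \<in> set \<sigma>s"
  shows "disjoint_blocks \<sigma>" "\<sigma> \<noteq> []" "\<sigma> \<in> canon_partitions (covered \<sigma>)"
proof -
  obtain i where i: "i < length \<sigma>s" "\<sigma> = \<sigma>s ! i" using assms(4) by (metis in_set_conv_nth)
  have "length \<sigma>s = length \<rho>" "\<forall>i<length \<sigma>s. \<sigma>s ! i \<in> canon_partitions (\<rho> ! i)"
    using assms(3) by (auto simp: listset_iff)
  then have \<sigma>: "\<sigma> \<in> canon_partitions (\<rho> ! i)" "\<rho> ! i \<in> set \<rho>" using i by auto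
  then have K: "\<rho> ! i \<noteq> {}" "finite (\<rho> ! i)"
    using canon_partitions_disjoint_blocks[OF assms(1,2)] by (auto simp: disjoint_blocks_def)
  show "disjoint_blocks \<sigma>" by (rule canon_partitions_disjoint_blocks[OF K(2) \<sigma>(1)])
  show "\<sigma> \<noteq> []" using covered_canon_partitions[OF \<sigma>(1)] K(1) by auto
  show "\<sigma> \<in> canon_partitions (covered \<sigma>)" using \<sigma>(1) covered_canon_partitions[OF \<sigma>(1)] by simp
qed

lemma psgn_concat_listset:
  assumes "finite I" "\<rho> \<in> canon_partitions I" "\<sigma>s \<in> listset (map canon_partitions \<rho>)"
  shows "psgn (concat \<sigma>s) = psgn \<rho> * prod_list (map psgn \<sigma>s)"
proof -
  have groups: "\<forall>\<sigma>\<in>set \<sigma>s. distinct (flat_blocks \<sigma>) \<and> (\<forall>X\<in>set \<sigma>. finite X)"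
    using listset_canon_partitions_groups(1)[OF assms] by (auto simp: disjoint_blocks_def)
  have "distinct (flat_blocks \<rho>)"
    using canon_partitions_disjoint_blocks[OF assms(1,2)] by (simp add: disjoint_blocks_def)
  moreover have "mset (flat_blocks (concat \<sigma>s)) = mset (flat_blocks \<rho>)"
    using mset_flat_blocks_covered[OF groups] map_covered_listset[OF assms(3)] by simp
  ultimately have "distinct (flat_blocks (concat \<sigma>s))"
    using mset_eq_imp_distinct_iff by blast
  then show ?thesis
    using psgn_concat[of \<sigma>s] groups map_covered_listset[OF assms(3)] \<open>distinct (flat_blocks \<rho>)\<close>
    by simp
qed

lemma comp_index_imp_listset:
  assumes "finite I" "\<pi> \<in> canon_partitions I" "hs \<in> comp_index \<pi>"
  shows "map covered hs \<in> canon_partitions I" "hs \<in> listset (map canon_partitions (map covered hs))"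
proof -
  have blocks: "disjoint_blocks \<pi>" by (rule canon_partitions_disjoint_blocks[OF assms(1,2)])
  have grouping: "grouping \<pi> hs" by (rule comp_index_grouping[OF assms(3)])
  have "covered (map covered hs) = covered (concat hs)" by auto
  also have "\<dots> = I" using grouping assms(2) by (simp add: grouping_def covered_canon_partitions)
  finally show "map covered hs \<in> canon_partitions I"
    using grouping_disjoint_blocks_covered[OF blocks grouping] assms(1,3)
    by (simp add: canon_partitions_iff disjoint_blocks_def comp_index_def)
  show "hs \<in> listset (map canon_partitions (map covered hs))"
    using assms(3) by (auto simp: listset_iff comp_index_def)
qed

lemma listset_imp_comp_index:
  assumes "finite I" "I \<noteq> {}" "\<rho> \<in> canon_partitions I" "\<sigma>s \<in> listset (map canon_partitions \<rho>)"
  defines "\<pi> \<equiv> sort_key set_key (concat \<sigma>s)"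
  shows "\<pi> \<in> canon_partitions I" "\<sigma>s \<in> comp_index \<pi>"
proof -
  have groups: "\<forall>\<sigma>\<in>set \<sigma>s. disjoint_blocks \<sigma> \<and> \<sigma> \<noteq> [] \<and> \<sigma> \<in> canon_partitions (covered \<sigma>)"
    using listset_canon_partitions_groups[OF assms(1,3,4)] by blast
  have covered: "map covered \<sigma>s = \<rho>" by (rule map_covered_listset[OF assms(4)])
  have "distinct (flat_blocks \<rho>)"
    using canon_partitions_disjoint_blocks[OF assms(1,3)] by (simp add: disjoint_blocks_def)
  moreover have "mset (flat_blocks (concat \<sigma>s)) = mset (flat_blocks \<rho>)"
    using mset_flat_blocks_covered[of \<sigma>s] groups covered by (simp add: disjoint_blocks_def)
  ultimately have "distinct (flat_blocks (concat \<sigma>s))"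
    using mset_eq_imp_distinct_iff by blast
  then have concat: "disjoint_blocks (concat \<sigma>s)"
    using groups by (auto simp: disjoint_blocks_def)
  have "covered (concat \<sigma>s) = covered (map covered \<sigma>s)" by auto
  then have "covered (concat \<sigma>s) = I" using covered assms(3) by (simp add: covered_canon_partitions)
  moreover have "sorted_wrt set_less \<pi>" unfolding \<pi>_def
    using concat disjoint_blocks_distinct[OF concat] by (intro sorted_wrt_set_less_sort_key) (auto simp: disjoint_blocks_def)
  moreover have "disjoint_blocks \<pi>" unfolding \<pi>_def by (rule disjoint_blocks_perm[OF concat]) simp
  ultimately show "\<pi> \<in> canon_partitions I"
    using assms(1) by (simp add: canon_partitions_iff disjoint_blocks_def \<pi>_def)
  show "\<sigma>s \<in> comp_index \<pi>"
    unfolding comp_index_def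
  proof (intro CollectI conjI ballI)
    show "\<sigma>s \<noteq> []" using covered assms(2,3) by (auto simp: canon_partitions_def)
    show "distinct (concat \<sigma>s)" by (rule disjoint_blocks_distinct[OF concat])
    show "set (concat \<sigma>s) = set \<pi>" by (simp add: \<pi>_def)
    show "sorted_wrt set_less (map covered \<sigma>s)"
      using covered assms(3) by (simp add: canon_partitions_def)
  qed (use groups in auto)
qed

lemma comp_index_UN_eq_listset_UN:
  assumes "finite I" "I \<noteq> {}"
  shows "(\<Union>\<pi>\<in>canon_partitions I. comp_index \<pi>) = (\<Union>\<rho>\<in>canon_partitions I. listset (map canon_partitions \<rho>))"
proof (intro equalityI subsetI)
  fix hs assume "hs \<in> (\<Union>\<pi>\<in>canon_partitions I. comp_index \<pi>)"
  then obtain \<pi> where "\<pi> \<in> canon_partitions I" "hs \<in> comp_index \<pi>" by blast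
  from comp_index_imp_listset[OF assms(1) this]
  show "hs \<in> (\<Union>\<rho>\<in>canon_partitions I. listset (map canon_partitions \<rho>))" by blast
next
  fix \<sigma>s assume "\<sigma>s \<in> (\<Union>\<rho>\<in>canon_partitions I. listset (map canon_partitions \<rho>))"
  then obtain \<rho> where "\<rho> \<in> canon_partitions I" "\<sigma>s \<in> listset (map canon_partitions \<rho>)" by blast
  from listset_imp_comp_index[OF assms this]
  show "\<sigma>s \<in> (\<Union>\<pi>\<in>canon_partitions I. comp_index \<pi>)" by blast
qed

lemma comp_index_disjoint:
  assumes "\<pi> \<in> canon_partitions I" "\<pi>' \<in> canon_partitions I" "\<pi> \<noteq> \<pi>'"
  shows "comp_index \<pi> \<inter> comp_index \<pi>' = {}"
proof (rule ccontr)
  assume "comp_index \<pi> \<inter> comp_index \<pi>' \<noteq> {}"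
  then have "set \<pi> = set \<pi>'" by (auto simp: comp_index_def)
  then show False using assms set_less_unique by (auto simp: canon_partitions_def)
qed

section \<open>Expanding both sides\<close>

context composition_setting
begin

lemma admissible_relabel:
  assumes "block_bijection Ks \<pi>" "finite I" "I \<subseteq> J" "\<pi> \<in> canon_partitions I" "gs \<in> comp_index Ks"
  shows "admissible (map (map (relabel Ks \<pi>)) gs) \<and> card_sorted (map (map (relabel Ks \<pi>)) gs)"
proof -
  interpret block_bijection Ks \<pi> by fact
  have v: "grouping Ks gs" by (rule comp_index_grouping[OF assms(5)])
  have v': "grouping \<pi> (map (map \<phi>) gs)" by (rule grouping_relabel[OF v])
  have "disjoint_blocks (concat (map (map \<phi>) gs))"
    by (rule grouping_disjoint_blocks_concat[OF canon_partitions_disjoint_blocks[OF assms(2,4)] v'])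
  moreover have "set (concat (map (map \<phi>) gs)) = set \<pi>" using v' unfolding grouping_def by blast
  then have "\<forall>X\<in>set (concat (map (map \<phi>) gs)). X \<subseteq> J"
    using assms(3) covered_canon_partitions[OF assms(4)] by blast
  moreover have "\<forall>h\<in>set (map (map \<phi>) gs). h \<noteq> []" using v' unfolding grouping_def by blast
  ultimately have "admissible (map (map \<phi>) gs)"
    unfolding admissible_def by blast
  moreover have "sorted (map card (map \<phi> \<rho>))" if "\<rho> \<in> set gs" for \<rho>
  proof -
    have "\<rho> \<in> canon_partitions (covered \<rho>)" using assms(5) that by (simp add: comp_index_def)
    then have "sorted (map card \<rho>)" by (rule canon_partitions_sorted_card)
    moreover have "set \<rho> \<subseteq> set Ks" using v that by (auto simp: grouping_def)
    then have "map card (map \<phi> \<rho>) = map card \<rho>" by (rule map_card_relabel)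
    ultimately show ?thesis by (simp only:)
  qed
  moreover have "sorted (group_sizes (map (map \<phi>) gs))"
  proof -
    have "group_sizes (map (map \<phi>) gs) = map card (map covered gs)"
      using card_covered_relabel[OF v] by simp
    moreover have "sorted (map card (map covered gs))"
      using assms(5) by (intro sorted_card_of_set_less) (simp add: comp_index_def)
    ultimately show ?thesis by (simp only:)
  qed
  ultimately show ?thesis by (simp add: card_sorted_def)
qed

lemma sum_comp_term_relabel:
  assumes "block_bijection Ks \<pi>" "finite I" "I \<subseteq> J" "\<pi> \<in> canon_partitions I"
  shows "(\<Sum>gs\<in>comp_index Ks. comp_term (map (map (relabel Ks \<pi>)) gs)) = (\<Sum>hs\<in>comp_index \<pi>. comp_term hs)"
proof -
  interpret block_bijection Ks \<pi> by fact
  interpret inverse: block_bijection \<pi> Ks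
    using blocks blocks' same_length same_cards by unfold_locales auto
  show ?thesis
  proof (rule sum.reindex_bij_witness[where i = "\<lambda>hs. normalize_groups (map (map \<psi>) hs)"
        and j = "\<lambda>gs. normalize_groups (map (map \<phi>) gs)"])
    fix gs assume gs: "gs \<in> comp_index Ks"
    show "normalize_groups (map (map \<psi>) (normalize_groups (map (map \<phi>) gs))) = gs"
      by (rule normalize_groups_relabel_inverse[OF gs])
    show "normalize_groups (map (map \<phi>) gs) \<in> comp_index \<pi>"
      by (rule normalize_groups_relabel[OF gs])
    show "comp_term (normalize_groups (map (map \<phi>) gs)) = comp_term (map (map \<phi>) gs)"
      using admissible_relabel[OF assms gs] comp_term_normalize by blast
  next
    fix hs assume hs: "hs \<in> comp_index \<pi>"
    show "normalize_groups (map (map \<phi>) (normalize_groups (map (map \<psi>) hs))) = hs"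
      by (rule inverse.normalize_groups_relabel_inverse[OF hs])
    show "normalize_groups (map (map \<psi>) hs) \<in> comp_index Ks"
      by (rule inverse.normalize_groups_relabel[OF hs])
  qed
qed

lemma comp_components_term_relabel:
  assumes "finite I" "\<pi> \<in> canon_partitions I" "gs \<in> comp_index (rho_can (map card \<pi>))"
  defines "Q \<equiv> rho_can (map card \<pi>)"
  shows "psgn (concat gs) *\<^sub>R tau (group_sizes gs)
           (map (\<lambda>\<rho>. eta (map card \<rho>) (map (\<lambda>K. the (map_of (zip Q (map a \<pi>)) K)) \<rho>)) gs)
         = psgn \<pi> *\<^sub>R comp_term (map (map (relabel Q \<pi>)) gs)"
proof -
  interpret block_bijection Q \<pi> unfolding Q_def by (rule block_bijection_rho_can[OF assms(1,2)])
  have v: "grouping Q gs" unfolding Q_def by (rule comp_index_grouping[OF assms(3)])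
  have sub: "set \<rho> \<subseteq> set Q" if "\<rho> \<in> set gs" for \<rho> using v that by (auto simp: grouping_def)
  have "eta (map card \<rho>) (map (\<lambda>K. the (map_of (zip Q (map a \<pi>)) K)) \<rho>) = eta_block (map \<phi> \<rho>)"
    if "\<rho> \<in> set gs" for \<rho>
  proof -
    have "map (\<lambda>K. the (map_of (zip Q (map a \<pi>)) K)) \<rho> = map a (map \<phi> \<rho>)"
      using sub[OF that] by (auto simp: lookup_relabel)
    moreover have "map card (map \<phi> \<rho>) = map card \<rho>" by (rule map_card_relabel[OF sub[OF that]])
    ultimately show ?thesis by (simp only: eta_block_def)
  qed
  then have args: "map (\<lambda>\<rho>. eta (map card \<rho>) (map (\<lambda>K. the (map_of (zip Q (map a \<pi>)) K)) \<rho>)) gs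
      = map eta_block (map (map \<phi>) gs)"
    by simp
  have sizes: "group_sizes gs = group_sizes (map (map \<phi>) gs)"
    using card_covered_relabel[OF v] by simp
  have "mset (concat gs) = mset Q"
    using v distinct_Ks by (simp add: grouping_def set_eq_iff_mset_eq_distinct[symmetric])
  then have "psgn (concat gs) * psgn (map \<phi> (concat gs)) = psgn \<pi>"
    using psgn_relabel psgn_consecutive_blocks by (simp add: Q_def rho_can_consecutive_blocks)
  then have "psgn (concat gs) * psgn (concat (map (map \<phi>) gs)) = psgn \<pi>"
    by (simp add: map_concat)
  then have sign: "psgn (concat gs) = psgn \<pi> * psgn (concat (map (map \<phi>) gs))"
    using psgn_mult_self[of "concat (map (map \<phi>) gs)"] by (metis mult.assoc mult.right_neutral)
  show ?thesis unfolding comp_term_def args sizes sign by (simp only: scaleR_scaleR)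
qed

lemma comp_components_relabel:
  assumes "finite I" "I \<subseteq> J" "\<pi> \<in> canon_partitions I"
  shows "comp_components tau eta (map card \<pi>) (map a \<pi>) = psgn \<pi> *\<^sub>R (\<Sum>hs\<in>comp_index \<pi>. comp_term hs)"
proof -
  let ?Q = "rho_can (map card \<pi>)"
  have "comp_components tau eta (map card \<pi>) (map a \<pi>)
      = (\<Sum>gs\<in>comp_index ?Q. psgn \<pi> *\<^sub>R comp_term (map (map (relabel ?Q \<pi>)) gs))"
    unfolding comp_components_def Let_def
    using comp_components_term_relabel[OF assms(1,3)] by (intro sum.cong) auto
  also have "\<dots> = psgn \<pi> *\<^sub>R (\<Sum>hs\<in>comp_index \<pi>. comp_term hs)"
    using sum_comp_term_relabel[OF block_bijection_rho_can[OF assms(1,3)] assms]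
    by (simp only: scaleR_sum_right[symmetric])
  finally show ?thesis .
qed

lemma canon_partition_valid_tuple:
  assumes "finite I" "I \<subseteq> J" "I \<noteq> {}" "\<rho> \<in> canon_partitions I"
  shows "valid_tuple n (map card \<rho>)"
proof -
  have blocks: "disjoint_blocks \<rho>" by (rule canon_partitions_disjoint_blocks[OF assms(1,4)])
  have "sum_list (map card \<rho>) = card I"
    using disjoint_blocks_card_covered[OF blocks] covered_canon_partitions[OF assms(4)] by simp
  also have "\<dots> \<le> n" using card_mono[OF finite_J assms(2)] card_J_le by simp
  finally have "sum_list (map card \<rho>) \<le> n" .
  moreover have "\<rho> \<noteq> []" using covered_canon_partitions[OF assms(4)] assms(3) by auto
  moreover have "\<forall>i\<in>set (map card \<rho>). 1 \<le> i"
    using blocks by (auto simp: disjoint_blocks_def Suc_le_eq card_gt_0_iff)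
  ultimately show ?thesis
    using canon_partitions_sorted_card[OF assms(4)] by (simp add: valid_tuple_def)
qed

lemma eta_block_canon_partition:
  assumes "finite K" "K \<noteq> {}" "K \<subseteq> J" "\<sigma> \<in> canon_partitions K"
  shows "eta_block \<sigma> \<in> B (card K) (eta0 m)"
proof -
  have "admissible [\<sigma>]"
    using canon_partitions_disjoint_blocks[OF assms(1,4)] covered_canon_partitions[OF assms(4)] assms(2,3)
    by (auto simp: admissible_def)
  then show ?thesis
    using eta_block_valid(3)[of "[\<sigma>]" \<sigma>] canon_partitions_sorted_card[OF assms(4)]
      covered_canon_partitions[OF assms(4)]
    by simp
qed

lemma induced_eta_eq:
  "K \<noteq> {} \<Longrightarrow> K \<subseteq> J \<Longrightarrow> induced eta J a K = (\<Sum>\<sigma>\<in>canon_partitions K. psgn \<sigma> *\<^sub>R eta_block \<sigma>)"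
  by (simp add: induced_def eta_block_def)

lemma tau_induced_expand:
  assumes "finite I" "I \<subseteq> J" "I \<noteq> {}" "\<rho> \<in> canon_partitions I"
  shows "psgn \<rho> *\<^sub>R tau (map card \<rho>) (map (induced eta J a) \<rho>)
           = (\<Sum>\<sigma>s\<in>listset (map canon_partitions \<rho>). comp_term \<sigma>s)"
proof -
  let ?p = "map card \<rho>" and ?g = "\<lambda>\<sigma>. psgn \<sigma> *\<^sub>R eta_block \<sigma>"
  have valid: "valid_tuple n ?p" by (rule canon_partition_valid_tuple[OF assms])
  have blocks: "K \<noteq> {} \<and> finite K \<and> K \<subseteq> J" if "K \<in> set \<rho>" for K
    using canon_partitions_disjoint_blocks[OF assms(1,4)] covered_canon_partitions[OF assms(4)] assms(2) that
    by (auto simp: disjoint_blocks_def)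
  have in_B: "eta_block \<sigma> \<in> B (?p ! i) (eta0 m)" if "i < length \<rho>" "\<sigma> \<in> canon_partitions (\<rho> ! i)" for i \<sigma>
    using eta_block_canon_partition[OF _ _ _ that(2)] blocks[of "\<rho> ! i"] that(1) by simp
  have "map (induced eta J a) \<rho> = map (\<lambda>S. \<Sum>\<sigma>\<in>S. ?g \<sigma>) (map canon_partitions \<rho>)"
    using blocks induced_eta_eq by simp
  also have "tau ?p ([] @ \<dots>) = (\<Sum>\<sigma>s\<in>listset (map canon_partitions \<rho>). tau ?p ([] @ map ?g \<sigma>s))"
  proof (rule component_expand_sums[OF morphism_tau family_B valid])
    show "\<forall>i<length (map canon_partitions \<rho>). finite (map canon_partitions \<rho> ! i) \<and>
        (\<forall>\<sigma>\<in>map canon_partitions \<rho> ! i. ?g \<sigma> \<in> B (?p ! (length [] + i)) (eta0 m))"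
      using blocks in_B component_subspace[OF morphism_tau family_B valid]
      by (auto simp: canon_partitions_finite real_vector.subspace_scale)
  qed simp_all
  finally have expand: "tau ?p (map (induced eta J a) \<rho>) = (\<Sum>\<sigma>s\<in>listset (map canon_partitions \<rho>). tau ?p (map ?g \<sigma>s))"
    by simp
  have "psgn \<rho> *\<^sub>R tau ?p (map ?g \<sigma>s) = comp_term \<sigma>s" if \<sigma>s: "\<sigma>s \<in> listset (map canon_partitions \<rho>)" for \<sigma>s
  proof -
    have l: "length \<sigma>s = length \<rho>" "\<forall>i<length \<sigma>s. \<sigma>s ! i \<in> canon_partitions (\<rho> ! i)"
      using \<sigma>s by (auto simp: listset_iff)
    have "tau ?p ([] @ map ?g \<sigma>s) = prod_list (map psgn \<sigma>s) *\<^sub>R tau ?p ([] @ map eta_block \<sigma>s)"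
      by (rule component_scalars[OF morphism_tau family_B valid]) (use l in_B in auto)
    moreover have "?p = group_sizes \<sigma>s" using map_covered_listset[OF \<sigma>s] by auto
    ultimately show ?thesis
      using psgn_concat_listset[OF assms(1,4) \<sigma>s] by (simp add: comp_term_def)
  qed
  then show ?thesis unfolding expand scaleR_sum_right by (rule sum.cong[OF refl])
qed

lemma induced_comp_eq_at:
  assumes "finite I" "I \<subseteq> J" "I \<noteq> {}"
  shows "(\<Sum>\<rho>\<in>canon_partitions I. psgn \<rho> *\<^sub>R tau (map card \<rho>) (map (induced eta J a) \<rho>))
       = (\<Sum>\<pi>\<in>canon_partitions I. psgn \<pi> *\<^sub>R comp_components tau eta (map card \<pi>) (map a \<pi>))"
proof -
  have finite: "finite (canon_partitions I)" by (rule canon_partitions_finite[OF assms(1)])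
  have finite_listset: "finite (listset (map canon_partitions \<rho>))" if "\<rho> \<in> canon_partitions I" for \<rho>
    using canon_partitions_disjoint_blocks[OF assms(1) that]
    by (intro listset_finite) (auto simp: disjoint_blocks_def canon_partitions_finite)
  have "(\<Sum>\<rho>\<in>canon_partitions I. psgn \<rho> *\<^sub>R tau (map card \<rho>) (map (induced eta J a) \<rho>))
      = (\<Sum>\<rho>\<in>canon_partitions I. \<Sum>\<sigma>s\<in>listset (map canon_partitions \<rho>). comp_term \<sigma>s)"
    using tau_induced_expand[OF assms] by simp
  also have "\<dots> = sum comp_term (\<Union>\<rho>\<in>canon_partitions I. listset (map canon_partitions \<rho>))"
    using finite_listset map_covered_listset by (intro sum.UNION_disjoint[symmetric, OF finite]) blast+
  also have "\<dots> = sum comp_term (\<Union>\<pi>\<in>canon_partitions I. comp_index \<pi>)"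
    by (simp only: comp_index_UN_eq_listset_UN[OF assms(1,3)])
  also have "\<dots> = (\<Sum>\<pi>\<in>canon_partitions I. \<Sum>hs\<in>comp_index \<pi>. comp_term hs)"
    using comp_index_finite comp_index_disjoint by (intro sum.UNION_disjoint[OF finite]) auto
  also have "\<dots> = (\<Sum>\<pi>\<in>canon_partitions I. psgn \<pi> *\<^sub>R comp_components tau eta (map card \<pi>) (map a \<pi>))"
    using comp_components_relabel[OF assms(1,2)] psgn_mult_self by (intro sum.cong) simp_all
  finally show ?thesis .
qed

lemma induced_comp_eq: "induced tau J (induced eta J a) = induced (comp_components tau eta) J a"
proof
  fix I
  show "induced tau J (induced eta J a) I = induced (comp_components tau eta) J a I"
  proof (cases "I \<noteq> {} \<and> I \<subseteq> J")
    case True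
    then have "finite I" using finite_J finite_subset by blast
    with True show ?thesis by (simp add: induced_def[of tau] induced_def[of "comp_components tau eta"] induced_comp_eq_at)
  next
    case False
    then show ?thesis by (simp only: induced_def if_not_P[OF False] if_False)
  qed
qed

end

theorem mainTheorem8:
  fixes n :: nat
    and A :: "nat \<Rightarrow> 'm \<Rightarrow> 'a::real_vector set"
    and B :: "nat \<Rightarrow> 'n \<Rightarrow> 'b::real_vector set"
    and C :: "nat \<Rightarrow> 'p \<Rightarrow> 'c::real_vector set"
    and eta0 :: "'m \<Rightarrow> 'n" and tau0 :: "'n \<Rightarrow> 'p"
    and eta :: "nat list \<Rightarrow> 'a list \<Rightarrow> 'b"
    and tau :: "nat list \<Rightarrow> 'b list \<Rightarrow> 'c"
  assumes "vb_family n A" and "vb_family n B" and "vb_family n C"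
    and "sym_morphism n A B eta0 eta"
    and "sym_morphism n B C tau0 tau"
  shows "\<forall>J m a. J \<subseteq> {1..n} \<and> in_E A J m a \<longrightarrow>
           induced tau J (induced eta J a) = induced (comp_components tau eta) J a"
proof (intro allI impI)
  fix J m a assume "J \<subseteq> {1..n} \<and> in_E A J m a"
  then interpret composition_setting n A B C eta0 tau0 eta tau J m a
    using assms by unfold_locales auto
  show "induced tau J (induced eta J a) = induced (comp_components tau eta) J a"
    by (rule induced_comp_eq)
qed

end
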